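(* For all $\rho,\sigma\in S_n$, all $\rho$-fixed $\vec a$ and $\sigma$-fixed $\vec b$, the (untwisted) defect fusion product is $S_n$-crossed: $X^\rho_{\vec a}\otimes X^\sigma_{\vec b}=\rho\cdot X^\sigma_{\vec b}\otimes X^\rho_{\vec a}$.
   Context: Let $\mathcal{C}$ be a modular tensor category, $\mathrm{Irr}(\mathcal{C})$ its finite set of isomorphism classes of simple objects (containing $1$), $a\mapsto a^*$ duality, $C$ its fusion ring (free $\mathbb{Z}$-module on $\mathrm{Irr}(\mathcal{C})$, product $a\otimes b=\sum_cN_{ab}^cc$). Fix $n\ge2$. $C^{\boxtimes n}=C^{\otimes_{\mathbb{Z}}n}$ has basis the multilayer anyons $\vec a=a_1\boxtimes\cdots\boxtimes a_n$, layerwise product, unit $\vec1$; $S_n$ acts by permuting layers ($\rho$ moves layer $i$ to $\rho(i)$); permutations compose right to left. For $\sigma\in S_n$ with orbits $\mathcal{O}(\sigma)$ (cycles incl. fixed points), $\vec a$ is $\sigma$-fixed iff constant on orbits. $C_\sigma$: free $\mathbb{Z}$-module on symbols $X^\sigma_{\vec a}$ ($\vec a$ $\sigma$-fixed), identified with $R_\sigma=\bigotimes_{O\in\mathcal{O}(\sigma)}C$ via $X^\sigma_{\vec a}\leftrightarrow\bigotimes_Oa_O$; $X^\sigma_r$ for $r\in R_\sigma$. $C_{\mathrm{id}}=C^{\boxtimes n}$, $C^\times_{S_n}=\bigoplus_\sigma C_\sigma$; $S_n$-action $\rho\cdot X^\sigma_{\vec a}=X^{\rho\sigma\rho^{-1}}_{\rho\cdot\vec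 a}$. Confinement $c_\sigma:C^{\boxtimes n}\to R_\sigma$, linear, $c_\sigma(\vec a)=\bigotimes_O(\bigotimes_{k\in O}a_k)$. Anyon–defect fusion $\vec a\otimes X^\sigma_{\vec b}=X^\sigma_{\vec b}\otimes\vec a:=X^\sigma_{c_\sigma(\vec a)\cdot\vec b}$. A $\sigma$-deconfinement $d_\sigma(\vec b)$: any $d\in C^{\boxtimes n}$ with nonnegative coefficients and $d\otimes X^\sigma_{\vec1}=X^\sigma_{\vec b}$. For $t=(ij)$, $\Omega_t=\sum_{c\in\mathrm{Irr}(\mathcal{C})}\vec e_c$ ($c$ in layer $i$, $c^*$ in layer $j$, $1$ elsewhere). Following the paper's algorithm, $F(\rho,\sigma)\in C^{\boxtimes n}$: write $\rho=t_1\cdots t_m$ with each disjoint cycle $(i_1\cdots i_l)$ of $\rho$ written as $(i_1i_2)(i_2i_3)\cdots(i_{l-1}i_l)$; $\pi_{m+1}=\sigma$, $\pi_k=t_k\pi_{k+1}$; $F=\prod\Omega_{t_k}$ over $k$ with both indices of $t_k$ in a common cycle of $\pi_{k+1}$. The defect fusion product is bilinear with $X^\rho_{\vec a}\otimes X^\sigma_{\vec b}:=(d_\rho(\vec a)\otimes d_\sigma(\vec b)\otimes F(\rho,\sigma))\otimes X^{\rho\sigma}_{\vec1}$ (when $\rho\sigma=\mathrm{id}$ this is an element of $C^{\boxtimes n}$). *)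

theory Defs
  imports "HOL-Combinatorics.Combinatorics"
begin

text \<open>Simple objects = the finite type 'l; one = tensor unit; dual = duality;
  N a b c = fusion multiplicity N_{ab}^c.\<close>

definition fusion_ring :: "'l::finite \<Rightarrow> ('l \<Rightarrow> 'l) \<Rightarrow> ('l \<Rightarrow> 'l \<Rightarrow> 'l \<Rightarrow> nat) \<Rightarrow> bool" where
  "fusion_ring one dual N \<longleftrightarrow>
     (\<forall>a. dual (dual a) = a) \<and> dual one = one \<and>
     (\<forall>a c. N one a c = (if a = c then 1 else 0)) \<and>
     (\<forall>a b c. N a b c = N b a c) \<and>
     (\<forall>a b c d. (\<Sum>e\<in>UNIV. N a b e * N e c d) = (\<Sum>e\<in>UNIV. N b c e * N a e d)) \<and>
     (\<forall>a b. N a b one = (if b = dual a then 1 else 0)) \<and>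
     (\<forall>a b c. N a b c = N (dual a) c b) \<and>
     (\<forall>a b c. N (dual a) (dual b) (dual c) = N a b c)"

text \<open>A multilayer anyon is a function nat => 'l equal to one outside the layers {..<n}.\<close>
definition vecs :: "'l \<Rightarrow> nat \<Rightarrow> (nat \<Rightarrow> 'l) set" where
  "vecs one n = {a. \<forall>i\<ge>n. a i = one}"

definition unitvec :: "'l \<Rightarrow> nat \<Rightarrow> 'l" where
  "unitvec one = (\<lambda>i. one)"

definition fixvecs :: "'l \<Rightarrow> nat \<Rightarrow> (nat \<Rightarrow> nat) \<Rightarrow> (nat \<Rightarrow> 'l) set" where
  "fixvecs one n \<sigma> = {a \<in> vecs one n. \<forall>i<n. a (\<sigma> i) = a i}"

definition orbits :: "nat \<Rightarrow> (nat \<Rightarrow> nat) \<Rightarrow> nat set set" where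
  "orbits n \<sigma> = (\<lambda>i. range (\<lambda>k. (\<sigma> ^^ k) i)) ` {..<n}"

definition basis :: "'v \<Rightarrow> 'v \<Rightarrow> int" where
  "basis v = (\<lambda>w. if w = v then 1 else 0)"

text \<open>Elements of C^{boxtimes n}: integer coefficient functions on multilayer anyons,
  zero off vecs.  Layerwise product:\<close>
definition mulC :: "'l::finite \<Rightarrow> ('l \<Rightarrow> 'l \<Rightarrow> 'l \<Rightarrow> nat) \<Rightarrow> nat
    \<Rightarrow> ((nat \<Rightarrow> 'l) \<Rightarrow> int) \<Rightarrow> ((nat \<Rightarrow> 'l) \<Rightarrow> int) \<Rightarrow> ((nat \<Rightarrow> 'l) \<Rightarrow> int)" where
  "mulC one N n x y = (\<lambda>c. if c \<in> vecs one n then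
      (\<Sum>a\<in>vecs one n. \<Sum>b\<in>vecs one n. x a * y b * (\<Prod>i<n. int (N (a i) (b i) (c i))))
     else 0)"

text \<open>Elements of R_sigma = C_sigma: integer coefficient functions on sigma-fixed anyons
  (X^sigma_a identified with a), zero elsewhere.  Orbitwise product:\<close>
definition mulR :: "'l::finite \<Rightarrow> ('l \<Rightarrow> 'l \<Rightarrow> 'l \<Rightarrow> nat) \<Rightarrow> nat \<Rightarrow> (nat \<Rightarrow> nat)
    \<Rightarrow> ((nat \<Rightarrow> 'l) \<Rightarrow> int) \<Rightarrow> ((nat \<Rightarrow> 'l) \<Rightarrow> int) \<Rightarrow> ((nat \<Rightarrow> 'l) \<Rightarrow> int)" where
  "mulR one N n \<sigma> r s = (\<lambda>c. if c \<in> fixvecs one n \<sigma> then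
      (\<Sum>a\<in>fixvecs one n \<sigma>. \<Sum>b\<in>fixvecs one n \<sigma>. r a * s b *
          (\<Prod>Ob\<in>orbits n \<sigma>. int (N (a (Min Ob)) (b (Min Ob)) (c (Min Ob)))))
     else 0)"

fun fusl :: "'l::finite \<Rightarrow> ('l \<Rightarrow> 'l \<Rightarrow> 'l \<Rightarrow> nat) \<Rightarrow> 'l list \<Rightarrow> 'l \<Rightarrow> int" where
  "fusl one N [] = basis one"
| "fusl one N (a # as) = (\<lambda>c. \<Sum>e\<in>UNIV. int (N a e c) * fusl one N as e)"

text \<open>Confinement c_sigma : C^{boxtimes n} -> R_sigma, linear extension of
  c_sigma(a) = tensor over orbits O of (tensor_{k in O} a_k).\<close>
definition conf :: "'l::finite \<Rightarrow> ('l \<Rightarrow> 'l \<Rightarrow> 'l \<Rightarrow> nat) \<Rightarrow> nat \<Rightarrow> (nat \<Rightarrow> nat)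
    \<Rightarrow> ((nat \<Rightarrow> 'l) \<Rightarrow> int) \<Rightarrow> ((nat \<Rightarrow> 'l) \<Rightarrow> int)" where
  "conf one N n \<sigma> x = (\<lambda>c. if c \<in> fixvecs one n \<sigma> then
      (\<Sum>a\<in>vecs one n. x a *
          (\<Prod>Ob\<in>orbits n \<sigma>. fusl one N (map a (sorted_list_of_set Ob)) (c (Min Ob))))
     else 0)"

text \<open>Anyon-defect fusion: x (in C^{boxtimes n}) fused with X^sigma_r (r in R_sigma)
  is X^sigma_{c_sigma(x) r}.\<close>
definition ad_fuse :: "'l::finite \<Rightarrow> ('l \<Rightarrow> 'l \<Rightarrow> 'l \<Rightarrow> nat) \<Rightarrow> nat \<Rightarrow> (nat \<Rightarrow> nat)
    \<Rightarrow> ((nat \<Rightarrow> 'l) \<Rightarrow> int) \<Rightarrow> ((nat \<Rightarrow> 'l) \<Rightarrow> int) \<Rightarrow> ((nat \<Rightarrow> 'l) \<Rightarrow> int)" where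
  "ad_fuse one N n \<sigma> x r = mulR one N n \<sigma> (conf one N n \<sigma> x) r"

text \<open>d is a sigma-deconfinement of b: d in C^{boxtimes n} with nonnegative coefficients
  and d fused with X^sigma_1 equal to X^sigma_b.\<close>
definition is_deconf :: "'l::finite \<Rightarrow> ('l \<Rightarrow> 'l \<Rightarrow> 'l \<Rightarrow> nat) \<Rightarrow> nat \<Rightarrow> (nat \<Rightarrow> nat)
    \<Rightarrow> (nat \<Rightarrow> 'l) \<Rightarrow> ((nat \<Rightarrow> 'l) \<Rightarrow> int) \<Rightarrow> bool" where
  "is_deconf one N n \<sigma> b d \<longleftrightarrow>
     (\<forall>v. v \<notin> vecs one n \<longrightarrow> d v = 0) \<and> (\<forall>v. 0 \<le> d v) \<and>
     ad_fuse one N n \<sigma> d (basis (unitvec one)) = basis b"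

definition Omega :: "'l::finite \<Rightarrow> ('l \<Rightarrow> 'l) \<Rightarrow> nat \<Rightarrow> nat \<Rightarrow> ((nat \<Rightarrow> 'l) \<Rightarrow> int)" where
  "Omega one dual i j = (\<lambda>v. \<Sum>c\<in>UNIV. basis ((unitvec one)(i := c, j := dual c)) v)"

text \<open>Any order of cycles and any starting points are allowed.\<close>
definition cycle_decomp :: "nat \<Rightarrow> (nat \<Rightarrow> nat) \<Rightarrow> nat list list \<Rightarrow> bool" where
  "cycle_decomp n \<rho> cs \<longleftrightarrow>
     distinct (concat cs) \<and>
     (\<forall>cl\<in>set cs. cl \<noteq> [] \<and> (\<forall>k<length cl. \<rho> (cl ! k) = cl ! ((k + 1) mod length cl))) \<and>
     (\<forall>i<n. \<rho> i \<noteq> i \<longrightarrow> i \<in> set (concat cs))"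

definition transp_list :: "nat list list \<Rightarrow> (nat \<times> nat) list" where
  "transp_list cs = concat (map (\<lambda>cl. zip cl (tl cl)) cs)"

text \<open>Product t_1 ... t_m (composition right to left).\<close>
definition tprod :: "(nat \<times> nat) list \<Rightarrow> nat \<Rightarrow> nat" where
  "tprod ts = foldr (\<lambda>(i, j) f. transpose i j \<circ> f) ts id"

definition same_cycle :: "(nat \<Rightarrow> nat) \<Rightarrow> nat \<Rightarrow> nat \<Rightarrow> bool" where
  "same_cycle \<pi> i j \<longleftrightarrow> (\<exists>k. (\<pi> ^^ k) i = j)"

text \<open>Fcalc ts sigma: with pi_{m+1} = sigma, pi_k = t_k pi_{k+1}, the product of
  Omega_{t_k} over those k whose two indices lie in a common cycle of pi_{k+1}.\<close>
fun Fcalc :: "'l::finite \<Rightarrow> ('l \<Rightarrow> 'l) \<Rightarrow> ('l \<Rightarrow> 'l \<Rightarrow> 'l \<Rightarrow> nat) \<Rightarrow> nat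
    \<Rightarrow> (nat \<times> nat) list \<Rightarrow> (nat \<Rightarrow> nat) \<Rightarrow> ((nat \<Rightarrow> 'l) \<Rightarrow> int)" where
  "Fcalc one dual N n [] \<sigma> = basis (unitvec one)"
| "Fcalc one dual N n ((i, j) # ts) \<sigma> =
     mulC one N n
       (if same_cycle (tprod ts \<circ> \<sigma>) i j then Omega one dual i j else basis (unitvec one))
       (Fcalc one dual N n ts \<sigma>)"

definition Ftw :: "'l::finite \<Rightarrow> ('l \<Rightarrow> 'l) \<Rightarrow> ('l \<Rightarrow> 'l \<Rightarrow> 'l \<Rightarrow> nat) \<Rightarrow> nat
    \<Rightarrow> nat list list \<Rightarrow> (nat \<Rightarrow> nat) \<Rightarrow> ((nat \<Rightarrow> 'l) \<Rightarrow> int)" where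
  "Ftw one dual N n cs \<sigma> = Fcalc one dual N n (transp_list cs) \<sigma>"

text \<open>X^rho_a (x) X^sigma_b computed with deconfinements d1 = d_rho(a), d2 = d_sigma(b) and
  the cycle decomposition cs of rho used to compute F(rho, sigma); the result is the
  defect (rho sigma, element of R_{rho sigma}).\<close>
definition defect_prod :: "'l::finite \<Rightarrow> ('l \<Rightarrow> 'l) \<Rightarrow> ('l \<Rightarrow> 'l \<Rightarrow> 'l \<Rightarrow> nat) \<Rightarrow> nat
    \<Rightarrow> (nat \<Rightarrow> nat) \<Rightarrow> (nat \<Rightarrow> nat) \<Rightarrow> ((nat \<Rightarrow> 'l) \<Rightarrow> int) \<Rightarrow> ((nat \<Rightarrow> 'l) \<Rightarrow> int)
    \<Rightarrow> nat list list \<Rightarrow> (nat \<Rightarrow> nat) \<times> ((nat \<Rightarrow> 'l) \<Rightarrow> int)" where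
  "defect_prod one dual N n \<rho> \<sigma> d1 d2 cs =
     (\<rho> \<circ> \<sigma>, ad_fuse one N n (\<rho> \<circ> \<sigma>)
                 (mulC one N n (mulC one N n d1 d2) (Ftw one dual N n cs \<sigma>))
                 (basis (unitvec one)))"

text \<open>S_n action on anyons: rho moves layer i to rho(i).\<close>
definition act_vec :: "(nat \<Rightarrow> nat) \<Rightarrow> (nat \<Rightarrow> 'l) \<Rightarrow> (nat \<Rightarrow> 'l)" where
  "act_vec \<rho> a = a \<circ> inv \<rho>"

end

theory Submission
  imports Defs
begin

(* Both sides are defects of type \<rho>\<sigma> = (\<rho>\<sigma>\<rho>\<inverse>)\<rho>, so it suffices to compare the coefficients of
   their confinements. Each coefficient is a unit coefficient of blockwise fusion: for a partition P
   of the layers, fuse inside every block of P and read off the unit. Multiplying by \<Omega>_(ij) acts on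
   such functionals by merging the blocks of i and j or, when i and j already share a block, by
   leaving one factor \<omega> = \<Sum>_c c c* on it. Running through the transpositions of the twist F(r, q),
   each side becomes a unit coefficient for the partition generated by the cycles of r and q,
   applied to the two deconfinements and to powers of \<omega>, where (r, q) = (\<rho>, \<sigma>) on the left and
   (\<rho>\<sigma>\<rho>\<inverse>, \<rho>) on the right; both pairs generate the same partition. Inside such a functional a
   deconfinement may be replaced by the anyon carrying its label on the minimum of each orbit, and
   b and \<rho>.b give the same fusion on every block. Finally, the exponent of \<omega> on a block is the
   genus of the permutation triple (r, q, (r q)\<inverse>) there (Riemann-Hurwitz), and conjugation by \<rho>
   shows that both pairs have the same cycle counts on every block. *)

section \<open>The fusion ring\<close>

locale fusion_rules =
  fixes one :: "'l::finite" and dual :: "'l \<Rightarrow> 'l" and N :: "'l \<Rightarrow> 'l \<Rightarrow> 'l \<Rightarrow> nat"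
  assumes fusion_ring: "fusion_ring one dual N"
begin

lemma dual_dual [simp]: "dual (dual a) = a"
  using fusion_ring unfolding fusion_ring_def by blast

lemma N_one_left: "N one a c = (if a = c then 1 else 0)"
  using fusion_ring unfolding fusion_ring_def by blast

lemma N_commute: "N a b c = N b a c"
  using fusion_ring unfolding fusion_ring_def by blast

lemma N_assoc: "(\<Sum>e\<in>UNIV. N a b e * N e c d) = (\<Sum>e\<in>UNIV. N b c e * N a e d)"
  using fusion_ring unfolding fusion_ring_def by blast

lemma N_unit_right: "N a b one = (if b = dual a then 1 else 0)"
  using fusion_ring unfolding fusion_ring_def by blast

lemma N_unit_right_int: "int (N a b one) = (if b = dual a then 1 else 0)"
  by (simp add: N_unit_right)

abbreviation lbasis :: "'l \<Rightarrow> 'l \<Rightarrow> int" where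
  "lbasis \<equiv> basis"

definition fmul :: "('l \<Rightarrow> int) \<Rightarrow> ('l \<Rightarrow> int) \<Rightarrow> ('l \<Rightarrow> int)" where
  "fmul x y = (\<lambda>c. \<Sum>a\<in>UNIV. \<Sum>b\<in>UNIV. x a * y b * int (N a b c))"

lemma basis_apply: "basis a c = (if c = a then 1 else 0)"
  by (simp add: basis_def)

lemma sum_delta_mult: "(\<Sum>a\<in>UNIV. (if a = (k::'l) then 1 else 0) * (g a :: int)) = g k"
proof -
  have "(\<Sum>a\<in>UNIV. (if a = k then 1 else 0) * g a) = (\<Sum>a\<in>UNIV. if a = k then g a else 0)"
    by (rule sum.cong) auto
  then show ?thesis by (simp add: sum.delta)
qed

lemma sum_reorder3:
  fixes f :: "'a \<Rightarrow> 'b \<Rightarrow> 'c \<Rightarrow> int"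
  shows "(\<Sum>e\<in>E. \<Sum>b\<in>B. \<Sum>c\<in>C. f e b c) = (\<Sum>b\<in>B. \<Sum>c\<in>C. \<Sum>e\<in>E. f e b c)"
proof -
  have "(\<Sum>e\<in>E. \<Sum>b\<in>B. \<Sum>c\<in>C. f e b c) = (\<Sum>b\<in>B. \<Sum>e\<in>E. \<Sum>c\<in>C. f e b c)"
    by (rule sum.swap)
  also have "\<dots> = (\<Sum>b\<in>B. \<Sum>c\<in>C. \<Sum>e\<in>E. f e b c)"
    by (rule sum.cong[OF refl], rule sum.swap)
  finally show ?thesis .
qed

lemma sum_reorder4:
  fixes f :: "'a \<Rightarrow> 'b \<Rightarrow> 'c \<Rightarrow> 'd \<Rightarrow> int"
  shows "(\<Sum>e\<in>E. \<Sum>c\<in>C. \<Sum>a\<in>A. \<Sum>b\<in>B. f e c a b) = (\<Sum>a\<in>A. \<Sum>b\<in>B. \<Sum>c\<in>C. \<Sum>e\<in>E. f e c a b)"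
proof -
  have "(\<Sum>e\<in>E. \<Sum>c\<in>C. \<Sum>a\<in>A. \<Sum>b\<in>B. f e c a b) = (\<Sum>e\<in>E. \<Sum>a\<in>A. \<Sum>c\<in>C. \<Sum>b\<in>B. f e c a b)"
    by (rule sum.cong[OF refl], rule sum.swap)
  also have "\<dots> = (\<Sum>a\<in>A. \<Sum>e\<in>E. \<Sum>c\<in>C. \<Sum>b\<in>B. f e c a b)" by (rule sum.swap)
  also have "\<dots> = (\<Sum>a\<in>A. \<Sum>e\<in>E. \<Sum>b\<in>B. \<Sum>c\<in>C. f e c a b)"
    by (rule sum.cong[OF refl], rule sum.cong[OF refl], rule sum.swap)
  also have "\<dots> = (\<Sum>a\<in>A. \<Sum>b\<in>B. \<Sum>e\<in>E. \<Sum>c\<in>C. f e c a b)"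
    by (rule sum.cong[OF refl], rule sum.swap)
  also have "\<dots> = (\<Sum>a\<in>A. \<Sum>b\<in>B. \<Sum>c\<in>C. \<Sum>e\<in>E. f e c a b)"
    by (rule sum.cong[OF refl], rule sum.cong[OF refl], rule sum.swap)
  finally show ?thesis .
qed

lemma fmul_commute: "fmul x y = fmul y x"
  unfolding fmul_def by (rule ext, subst sum.swap) (simp add: N_commute mult_ac)

lemma fmul_lbasis_left: "fmul (lbasis k) y c = (\<Sum>b\<in>UNIV. y b * int (N k b c))"
proof -
  have "fmul (lbasis k) y c = (\<Sum>a\<in>UNIV. (if a = k then 1 else 0) * (\<Sum>b\<in>UNIV. y b * int (N a b c)))"
    unfolding fmul_def basis_apply by (simp add: sum_distrib_left mult_ac)
  then show ?thesis by (simp only: sum_delta_mult)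
qed

lemma fmul_lbasis_right: "fmul X (lbasis e) c = (\<Sum>a\<in>UNIV. X a * int (N a e c))"
  by (subst fmul_commute, simp add: fmul_lbasis_left N_commute mult_ac)

lemma fmul_one_left: "fmul (lbasis one) x = x"
proof
  fix c
  have "fmul (lbasis one) x c = (\<Sum>b\<in>UNIV. (if b = c then 1 else 0) * x b)"
    unfolding fmul_lbasis_left by (rule sum.cong) (auto simp: N_one_left)
  then show "fmul (lbasis one) x c = x c" by (simp only: sum_delta_mult)
qed

lemma fmul_one_right: "fmul X (lbasis one) = X"
  by (subst fmul_commute) (rule fmul_one_left)

lemma fmul_assoc: "fmul (fmul x y) z = fmul x (fmul y z)"
proof
  fix d
  have "fmul (fmul x y) z d =
      (\<Sum>e\<in>UNIV. \<Sum>c\<in>UNIV. \<Sum>a\<in>UNIV. \<Sum>b\<in>UNIV. x a * y b * z c * (int (N a b e) * int (N e c d)))"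
    unfolding fmul_def by (simp add: sum_distrib_right sum_distrib_left mult_ac)
  also have "\<dots> =
      (\<Sum>a\<in>UNIV. \<Sum>b\<in>UNIV. \<Sum>c\<in>UNIV. \<Sum>e\<in>UNIV. x a * y b * z c * (int (N a b e) * int (N e c d)))"
    by (rule sum_reorder4)
  also have "\<dots> = (\<Sum>a\<in>UNIV. \<Sum>b\<in>UNIV. \<Sum>c\<in>UNIV. x a * y b * z c * int (\<Sum>e\<in>UNIV. N a b e * N e c d))"
    by (simp add: sum_distrib_left)
  also have "\<dots> = (\<Sum>a\<in>UNIV. \<Sum>b\<in>UNIV. \<Sum>c\<in>UNIV. x a * y b * z c * int (\<Sum>e\<in>UNIV. N b c e * N a e d))"
    by (simp only: N_assoc)
  also have "\<dots> =
      (\<Sum>a\<in>UNIV. \<Sum>b\<in>UNIV. \<Sum>c\<in>UNIV. \<Sum>e\<in>UNIV. x a * y b * z c * (int (N b c e) * int (N a e d)))"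
    by (simp add: sum_distrib_left)
  also have "\<dots> =
      (\<Sum>a\<in>UNIV. \<Sum>e\<in>UNIV. \<Sum>b\<in>UNIV. \<Sum>c\<in>UNIV. x a * y b * z c * (int (N b c e) * int (N a e d)))"
    by (rule sum.cong[OF refl], rule sum_reorder3[symmetric])
  also have "\<dots> = fmul x (fmul y z) d"
    unfolding fmul_def by (simp add: sum_distrib_right sum_distrib_left mult_ac)
  finally show "fmul (fmul x y) z d = fmul x (fmul y z) d" .
qed

sublocale fusion: comm_monoid_set fmul "lbasis one"
  by (unfold_locales; fact fmul_assoc fmul_commute fmul_one_right)

lemma fmul_expand_left: "fmul X R c = (\<Sum>a\<in>UNIV. X a * fmul (lbasis a) R c)"
  unfolding fmul_lbasis_left unfolding fmul_def by (simp add: sum_distrib_left mult_ac)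

lemma fmul_expand_right: "fmul X R c = (\<Sum>a\<in>UNIV. R a * fmul X (lbasis a) c)"
  by (subst (1 2) fmul_commute) (rule fmul_expand_left)

lemma fmul_sum_left: "fmul (\<lambda>z. \<Sum>i\<in>S. f i z) y c = (\<Sum>i\<in>S. fmul (f i) y c)"
  unfolding fmul_def by (simp add: sum_distrib_right sum_distrib_left mult_ac sum.swap[of _ S])

lemma unit_coeff_fmul: "fmul X Y one = (\<Sum>a\<in>UNIV. X a * Y (dual a))"
proof -
  have "fmul X Y one = (\<Sum>a\<in>UNIV. X a * (\<Sum>b\<in>UNIV. (if b = dual a then 1 else 0) * Y b))"
    unfolding fmul_def by (rule sum.cong) (auto simp: N_unit_right_int sum_distrib_left mult_ac)
  then show ?thesis by (simp only: sum_delta_mult)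
qed

lemma unit_coeff_fmul_lbasis: "fmul X (lbasis e) one = X (dual e)"
proof -
  have "fmul X (lbasis e) one = (\<Sum>a\<in>UNIV. (if a = dual e then 1 else 0) * X a)"
    unfolding fmul_lbasis_right by (rule sum.cong) (auto simp: N_unit_right N_commute[of _ e])
  then show ?thesis by (simp only: sum_delta_mult)
qed

lemma sum_dual_reindex: "(\<Sum>c\<in>UNIV. g (dual c)) = (\<Sum>c\<in>UNIV. (g c :: int))"
  by (rule sum.reindex_bij_witness[of _ dual dual]) auto

lemma sum_unit_coeff_fmul_dual: "(\<Sum>c\<in>UNIV. fmul X (lbasis c) one * fmul Y (lbasis (dual c)) one) =
    fmul X Y one"
proof -
  have "(\<Sum>c\<in>UNIV. fmul X (lbasis c) one * fmul Y (lbasis (dual c)) one) =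
      (\<Sum>c\<in>UNIV. X (dual c) * Y c)"
    by (simp add: unit_coeff_fmul_lbasis)
  also have "\<dots> = (\<Sum>c\<in>UNIV. X (dual (dual c)) * Y (dual c))"
    by (rule sum_dual_reindex[symmetric, of "\<lambda>c. X (dual c) * Y c"])
  also have "\<dots> = fmul X Y one" by (simp add: unit_coeff_fmul)
  finally show ?thesis .
qed

lemma fusion_neutral:
  assumes "\<And>k. k \<in> B \<Longrightarrow> g k = lbasis one" shows "fusion.F g B = lbasis one"
  by (rule fusion.neutral) (use assms in auto)

lemma fusion_single:
  assumes "finite B" "a \<in> B" "\<And>k. k \<in> B \<Longrightarrow> k \<noteq> a \<Longrightarrow> g k = lbasis one"
  shows "fusion.F g B = g a"
proof -
  have "fusion.F g B = fmul (g a) (fusion.F g (B - {a}))" by (rule fusion.remove[OF assms(1,2)])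
  also have "fusion.F g (B - {a}) = lbasis one" by (rule fusion.neutral) (use assms(3) in auto)
  finally show ?thesis by (simp add: fmul_one_right)
qed

lemma fusion_two:
  assumes "finite B" "a \<in> B" "b \<in> B" "a \<noteq> b" "\<And>k. k \<in> B \<Longrightarrow> k \<noteq> a \<Longrightarrow> k \<noteq> b \<Longrightarrow> g k = lbasis one"
  shows "fusion.F g B = fmul (g a) (g b)"
proof -
  have "fusion.F g B = fmul (g a) (fusion.F g (B - {a}))" by (rule fusion.remove[OF assms(1,2)])
  also have "fusion.F g (B - {a}) = g b" by (rule fusion_single) (use assms in auto)
  finally show ?thesis .
qed

lemma fusl_eq_fusion: "distinct xs \<Longrightarrow> fusl one N (map a xs) = fusion.F (\<lambda>k. lbasis (a k)) (set xs)"
proof (induction xs)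
  case Nil then show ?case by (simp add: fusion.empty)
next
  case (Cons x xs)
  have "fusl one N (map a (x # xs)) = fmul (lbasis (a x)) (fusl one N (map a xs))"
    by (rule ext) (simp add: fmul_lbasis_left mult_ac)
  then show ?case using Cons by (simp add: fusion.insert)
qed

lemma fusl_sorted_eq_fusion: "finite Ob \<Longrightarrow>
    fusl one N (map a (sorted_list_of_set Ob)) = fusion.F (\<lambda>k. lbasis (a k)) Ob"
  by (simp add: fusl_eq_fusion)

lemma prod_fusion_expand:
  fixes X :: "'i \<Rightarrow> 'l \<Rightarrow> int" and J :: "'b \<Rightarrow> 'i set"
  assumes "finite P" "B0 \<in> P" "k \<in> J B0" "\<And>B. B \<in> P \<Longrightarrow> B \<noteq> B0 \<Longrightarrow> k \<notin> J B" "finite (J B0)"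
  shows "(\<Prod>B\<in>P. fmul (fusion.F X (J B)) (Y B) one)
       = (\<Sum>x\<in>UNIV. X k x * (\<Prod>B\<in>P. fmul (fusion.F (X(k := lbasis x)) (J B)) (Y B) one))"
proof -
  define f where "f Z B = fmul (fusion.F Z (J B)) (Y B) one" for Z B
  let ?X = "\<lambda>x. X(k := lbasis x)"
  have rest: "(\<Prod>B\<in>P - {B0}. f (?X x) B) = (\<Prod>B\<in>P - {B0}. f X B)" for x
    unfolding f_def
    by (intro prod.cong refl arg_cong[where f="\<lambda>t. fmul t _ one"] fusion.cong)
      (use assms(4) in auto)
  have B0: "f Z B0 = fmul (Z k) (fmul (fusion.F X (J B0 - {k})) (Y B0)) one"
      if "\<And>i. i \<noteq> k \<Longrightarrow> Z i = X i" for Z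
  proof -
    have "fusion.F Z (J B0 - {k}) = fusion.F X (J B0 - {k})" using that by (intro fusion.cong) auto
    then show ?thesis unfolding f_def by (simp add: fusion.remove[OF assms(5,3)] fmul_assoc)
  qed
  have "(\<Prod>B\<in>P. f X B) = f X B0 * (\<Prod>B\<in>P - {B0}. f X B)"
    by (rule prod.remove[OF assms(1,2)])
  also have "f X B0 = (\<Sum>x\<in>UNIV. X k x * f (?X x) B0)"
    by (simp add: B0 fmul_expand_left[of "X k"])
  also have "(\<Sum>x\<in>UNIV. X k x * f (?X x) B0) * (\<Prod>B\<in>P - {B0}. f X B) =
      (\<Sum>x\<in>UNIV. X k x * (\<Prod>B\<in>P. f (?X x) B))"
    by (simp add: sum_distrib_right prod.remove[OF assms(1,2)] rest mult.assoc)
  finally show ?thesis unfolding f_def .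
qed

lemma sum_PiE_expand:
  fixes G :: "('i \<Rightarrow> 'l \<Rightarrow> int) \<Rightarrow> int"
  assumes "finite I" "\<And>i X. i \<in> I \<Longrightarrow> G X = (\<Sum>x\<in>UNIV. X i x * G (X(i := lbasis x)))"
  shows "G X = (\<Sum>c\<in>PiE I (\<lambda>_. UNIV). (\<Prod>i\<in>I. X i (c i)) * G (\<lambda>i.
      if i \<in> I then lbasis (c i) else X i))"
  using assms
proof (induction I arbitrary: X rule: finite_induct)
  case empty
  then show ?case by simp
next
  case (insert i I)
  have IH: "G Z = (\<Sum>c\<in>PiE I (\<lambda>_. UNIV). (\<Prod>j\<in>I. Z j (c j)) * G (\<lambda>j.
      if j \<in> I then lbasis (c j) else Z j))" for Z
    using insert.IH insert.prems by blast
  let ?H = "\<lambda>c. (\<Prod>j\<in>insert i I. X j (c j)) * G (\<lambda>j. if j \<in> insert i I then lbasis (c j) else X j)"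
  have "G X = (\<Sum>x\<in>UNIV. X i x * G (X(i := lbasis x)))" using insert.prems by blast
  also have "\<dots> = (\<Sum>x\<in>UNIV. \<Sum>c\<in>PiE I (\<lambda>_. UNIV). ?H (c(i := x)))"
  proof (rule sum.cong[OF refl])
    fix x
    have "G (X(i := lbasis x)) = (\<Sum>c\<in>PiE I (\<lambda>_. UNIV). (\<Prod>j\<in>I. (X(i := lbasis x)) j (c j)) *
        G (\<lambda>j. if j \<in> I then lbasis (c j) else (X(i := lbasis x)) j))"
      by (rule IH)
    also have "\<dots> = (\<Sum>c\<in>PiE I (\<lambda>_. UNIV). (\<Prod>j\<in>I. X j ((c(i := x)) j)) *
        G (\<lambda>j. if j \<in> insert i I then lbasis ((c(i := x)) j) else X j))"
      using insert.hyps(2)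
      by (intro sum.cong refl arg_cong2[where f="(*)"] prod.cong arg_cong[where f=G]) auto
    finally show "X i x * G (X(i := lbasis x)) = (\<Sum>c\<in>PiE I (\<lambda>_. UNIV). ?H (c(i := x)))"
      using insert.hyps(1,2) by (simp add: sum_distrib_left mult.assoc)
  qed
  also have "\<dots> = (\<Sum>c\<in>PiE (insert i I) (\<lambda>_. UNIV). ?H c)"
    unfolding PiE_insert_eq
    by (subst sum.reindex[OF inj_combinator[OF insert.hyps(2), of "\<lambda>_. UNIV"]])
      (simp add: sum.cartesian_product case_prod_unfold)
  finally show ?case .
qed

definition omega :: "'l \<Rightarrow> int" where
  "omega = (\<lambda>z. \<Sum>c\<in>UNIV. fmul (lbasis c) (lbasis (dual c)) z)"

end

section \<open>Cycles of permutations\<close>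

lemma conj_permutes:
  assumes "r permutes S" "s permutes S"
  shows "(r \<circ> s \<circ> inv r) permutes S" "r \<circ> s \<circ> inv r \<circ> r = r \<circ> s"
  using permutes_compose[OF permutes_inv[OF assms(1)] permutes_compose[OF assms(2,1)]]
  by (auto simp: fun_eq_iff permutes_inverses(2)[OF assms(1)])

definition cycle_rel :: "(nat \<Rightarrow> nat) \<Rightarrow> (nat \<times> nat) set" where
  "cycle_rel p = {(x, y). \<exists>k. (p ^^ k) x = y}"

lemma same_cycle_iff_cycle_rel: "same_cycle p i j \<longleftrightarrow> (i, j) \<in> cycle_rel p"
  by (simp add: same_cycle_def cycle_rel_def)

lemma cycle_rel_refl: "(x, x) \<in> cycle_rel p" unfolding cycle_rel_def by (auto intro: exI[of _ 0])

lemma cycle_rel_trans: "(x, y) \<in> cycle_rel p \<Longrightarrow> (y, z) \<in> cycle_rel p \<Longrightarrow> (x, z) \<in> cycle_rel p"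
  unfolding cycle_rel_def by clarsimp (metis funpow_add o_apply)

lemma cycle_rel_step: "(x, p x) \<in> cycle_rel p" unfolding cycle_rel_def by (auto intro: exI[of _ 1])

lemma cycle_rel_funpow: "(x, (p ^^ k) x) \<in> cycle_rel p" unfolding cycle_rel_def by auto

lemma cycle_rel_sym:
  assumes "p permutes S" "finite S" "(x, y) \<in> cycle_rel p" shows "(y, x) \<in> cycle_rel p"
proof -
  obtain m where m: "(p ^^ m) x = y" using assms(3) unfolding cycle_rel_def by auto
  have "permutation p" using assms(1,2) permutation_permutes by blast
  then obtain q where q: "(p ^^ q) = id" "q > 0" by (rule permutation_is_nilpotent)
  have qm: "(p ^^ (q * m)) = id" using q(1) by (metis funpow_mult id_funpow)
  have "(p ^^ ((q - 1) * m)) y = (p ^^ ((q - 1) * m + m)) x" using m by (simp add: funpow_add)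
  also have "(q - 1) * m + m = q * m" using q(2) by (cases q) auto
  finally have "(p ^^ ((q - 1) * m)) y = x" using qm by simp
  then show ?thesis unfolding cycle_rel_def by auto
qed

lemma cycle_rel_less:
  assumes "p permutes {..<(n::nat)}" "(x, y) \<in> cycle_rel p" shows "x < n \<longleftrightarrow> y < n"
proof -
  obtain k where "(p ^^ k) x = y" using assms(2) unfolding cycle_rel_def by auto
  moreover have "(p ^^ k) permutes {..<n}" by (rule permutes_funpow[OF assms(1)])
  ultimately show ?thesis using permutes_in_image by fastforce
qed

lemma cycle_rel_eq_rtrancl: "cycle_rel p = (range (\<lambda>x. (x, p x)))\<^sup>*"
proof (intro subset_antisym subrelI)
  fix x y assume "(x, y) \<in> cycle_rel p"
  then obtain k where "y = (p ^^ k) x" unfolding cycle_rel_def by auto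
  moreover have "(x, (p ^^ k) x) \<in> (range (\<lambda>x. (x, p x)))\<^sup>*" for k
    by (induction k) (auto intro: rtrancl_into_rtrancl)
  ultimately show "(x, y) \<in> (range (\<lambda>x. (x, p x)))\<^sup>*" by simp
next
  fix x y assume "(x, y) \<in> (range (\<lambda>x. (x, p x)))\<^sup>*"
  then show "(x, y) \<in> cycle_rel p"
    by induction (auto intro: cycle_rel_refl cycle_rel_trans cycle_rel_step)
qed

lemma cycle_rel_closed:
  assumes "\<And>x. p x \<in> B \<longleftrightarrow> x \<in> B" "(x, y) \<in> cycle_rel p" shows "x \<in> B \<longleftrightarrow> y \<in> B"
proof -
  obtain k where k: "(p ^^ k) x = y" using assms(2) unfolding cycle_rel_def by auto
  have "(p ^^ k) x \<in> B \<longleftrightarrow> x \<in> B" for k by (induction k) (simp_all add: assms(1))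
  then show ?thesis using k by blast
qed

lemma funpow_conj:
  assumes "r permutes S"
  shows "((r \<circ> s \<circ> inv r) ^^ k) = r \<circ> (s ^^ k) \<circ> inv r"
proof (induction k)
  case 0 then show ?case using permutes_inv_o(1)[OF assms] by simp
next
  case (Suc k)
  have "((r \<circ> s \<circ> inv r) ^^ Suc k) = (r \<circ> s \<circ> inv r) \<circ> ((r \<circ> s \<circ> inv r) ^^ k)"
    by (rule funpow.simps(2))
  also have "\<dots> = (r \<circ> s \<circ> inv r) \<circ> (r \<circ> (s ^^ k) \<circ> inv r)" by (simp only: Suc)
  also have "\<dots> = r \<circ> s \<circ> (inv r \<circ> r) \<circ> (s ^^ k) \<circ> inv r" by (simp add: o_assoc)
  also have "\<dots> = r \<circ> (s ^^ Suc k) \<circ> inv r" using permutes_inv_o(2)[OF assms]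
    by (simp add: o_assoc funpow_Suc_right[symmetric])
  finally show ?case .
qed

lemma cycle_rel_conj:
  assumes "r permutes S"
  shows "(r x, r y) \<in> cycle_rel (r \<circ> s \<circ> inv r) \<longleftrightarrow> (x, y) \<in> cycle_rel s"
proof -
  have ir: "inv r (r z) = z" for z using permutes_inverses(2)[OF assms] .
  have inj: "inj r" using permutes_inj[OF assms] .
  have "((r \<circ> s \<circ> inv r) ^^ k) (r x) = r ((s ^^ k) x)" for k by (simp add: funpow_conj[OF assms] ir)
  then show ?thesis unfolding cycle_rel_def using inj by (auto simp: inj_eq)
qed

lemma tprod_Nil: "tprod [] = id" by (simp add: tprod_def)

lemma tprod_Cons: "tprod ((i, j) # ts) = transpose i j \<circ> tprod ts"
  by (simp add: tprod_def)

lemma tprod_append: "tprod (a @ b) = tprod a \<circ> tprod b"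
  by (induction a) (auto simp: tprod_def)

lemma tprod_preserves:
  assumes "\<forall>(i, j)\<in>set ts. i \<in> B \<longleftrightarrow> j \<in> B" shows "tprod ts x \<in> B \<longleftrightarrow> x \<in> B"
  using assms
proof (induction ts arbitrary: x)
  case Nil then show ?case by (simp add: tprod_Nil)
next
  case (Cons e ts)
  obtain i j where e: "e = (i, j)" by (cases e)
  have "(i \<in> B \<longleftrightarrow> j \<in> B)" using Cons.prems e by auto
  then have "transpose i j y \<in> B \<longleftrightarrow> y \<in> B" for y by (auto simp: transpose_def)
  then show ?case using Cons e by (simp add: tprod_Cons)
qed

lemma tprod_zip_tl: "tprod (zip cl (tl cl)) = cycle_of_list cl"
  by (induction cl rule: cycle_of_list.induct) (auto simp: tprod_def)

lemma cycle_of_list_nth: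
  assumes "distinct cl" "k < length cl"
  shows "cycle_of_list cl (cl ! k) = cl ! ((k + 1) mod length cl)"
proof -
  have "map (cycle_of_list cl) cl = rotate1 cl"
    using cyclic_rotation[OF assms(1), of 1] by simp
  then have "cycle_of_list cl (cl ! k) = rotate1 cl ! k" using assms(2) by (metis nth_map)
  then show ?thesis using assms(2) by (simp add: nth_rotate1)
qed

lemma cycle_of_list_on:
  assumes "distinct cl" "\<forall>k<length cl. r (cl ! k) = cl ! ((k + 1) mod length cl)" "x \<in> set cl"
  shows "cycle_of_list cl x = r x" "r x \<in> set cl"
proof -
  obtain k where k: "k < length cl" "x = cl ! k" using assms(3) by (metis in_set_conv_nth)
  show "cycle_of_list cl x = r x" using cycle_of_list_nth[OF assms(1) k(1)] assms(2) k by simp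
  have "length cl > 0" using k(1) by linarith
  then have "(k + 1) mod length cl < length cl" by (rule mod_less_divisor)
  then show "r x \<in> set cl" using assms(2) k by simp
qed

lemma transp_list_Cons: "transp_list (cl # cs) = zip cl (tl cl) @ transp_list cs"
  by (simp add: transp_list_def)

lemma tprod_transp_list:
  assumes "distinct (concat cs)"
    "\<forall>cl\<in>set cs. cl \<noteq> [] \<and> (\<forall>k<length cl. r (cl ! k) = cl ! ((k + 1) mod length cl))"
  shows "tprod (transp_list cs) x = (if x \<in> set (concat cs) then r x else x)"
  using assms
proof (induction cs arbitrary: x)
  case Nil then show ?case by (simp add: transp_list_def tprod_def)
next
  case (Cons cl cs)
  have d: "distinct cl" "distinct (concat cs)" "set cl \<inter> set (concat cs) = {}"
    using Cons.prems(1) by auto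
  have cl: "\<forall>k<length cl. r (cl ! k) = cl ! ((k + 1) mod length cl)" using Cons.prems(2) by auto
  have IH: "tprod (transp_list cs) y = (if y \<in> set (concat cs) then r y else y)" for y
    using Cons.IH[OF d(2)] Cons.prems(2) by auto
  have rin: "r y \<in> set (concat cs)" if yin: "y \<in> set (concat cs)" for y
  proof -
    obtain cl' where "cl' \<in> set cs" "y \<in> set cl'" using yin unfolding set_concat by blast
    moreover have "distinct cl'" using d(2) calculation(1) by (metis distinct_concat_iff)
    ultimately show ?thesis using cycle_of_list_on(2)[of cl' r y] Cons.prems(2) by auto
  qed
  have T: "tprod (transp_list (cl # cs)) y = cycle_of_list cl (tprod (transp_list cs) y)" for y
    by (simp add: transp_list_Cons tprod_append tprod_zip_tl)
  show ?case
  proof (cases "x \<in> set cl")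
    case True
    then have "x \<notin> set (concat cs)" using d(3) by auto
    then show ?thesis using T IH True cycle_of_list_on(1)[OF d(1) cl True] by simp
  next
    case False
    show ?thesis
    proof (cases "x \<in> set (concat cs)")
      case True
      have "r x \<notin> set cl" using rin[OF True] d(3) by auto
      then show ?thesis using T IH True id_outside_supp by simp
    next
      case False2: False
      then show ?thesis using T IH False id_outside_supp by simp
    qed
  qed
qed

lemma zip_tl_mem: "(a, b) \<in> set (zip cl (tl cl)) \<Longrightarrow> a \<in> set cl \<and> b \<in> set cl \<and> length cl \<ge> 2"
  by (induction cl rule: cycle_of_list.induct) auto

lemma zip_tl_step: "distinct cl \<Longrightarrow> (a, b) \<in> set (zip cl (tl cl)) \<Longrightarrow>
    \<exists>k. k + 1 < length cl \<and> a = cl ! k \<and> b = cl ! (k + 1)"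
proof (induction cl rule: cycle_of_list.induct)
  case (1 i j cs)
  show ?case
  proof (cases "(a, b) = (i, j)")
    case True then show ?thesis by (intro exI[of _ 0]) auto
  next
    case False
    then have "(a, b) \<in> set (zip (j # cs) cs)" using "1.prems" by auto
    then obtain k where "k + 1 < length (j # cs)" "a = (j # cs) ! k" "b = (j # cs) ! (k + 1)"
      using 1 by auto
    then show ?thesis by (intro exI[of _ "Suc k"]) auto
  qed
qed auto

definition pair_elems :: "(nat \<times> nat) list \<Rightarrow> nat set" where
  "pair_elems ts = fst ` set ts \<union> snd ` set ts"

fun fresh_pairs :: "(nat \<times> nat) list \<Rightarrow> bool" where
  "fresh_pairs [] = True"
| "fresh_pairs ((a, b) # ts) = (a \<notin> fst ` set ts \<and> a \<notin> snd ` set ts \<and> a \<noteq> b \<and> fresh_pairs ts)"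

lemma fresh_pairs_append: "fresh_pairs A \<Longrightarrow> fresh_pairs B \<Longrightarrow> pair_elems A \<inter> pair_elems B = {} \<Longrightarrow>
    fresh_pairs (A @ B)"
  by (induction A rule: fresh_pairs.induct) (auto simp: pair_elems_def)

lemma pair_elems_zip_tl: "pair_elems (zip cl (tl cl)) \<subseteq> set cl"
  by (induction cl rule: cycle_of_list.induct) (auto simp: pair_elems_def)

lemma fresh_pairs_zip_tl: "distinct cl \<Longrightarrow> fresh_pairs (zip cl (tl cl))"
proof (induction cl rule: cycle_of_list.induct)
  case (1 i j cs)
  have "pair_elems (zip (j # cs) cs) \<subseteq> set (j # cs)" using pair_elems_zip_tl[of "j # cs"] by simp
  then have "i \<notin> fst ` set (zip (j # cs) cs)" "i \<notin> snd ` set (zip (j # cs) cs)"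
    using "1.prems" by (auto simp: pair_elems_def)
  then show ?case using 1 by simp
qed auto

lemma pair_elems_transp_list: "pair_elems (transp_list cs) \<subseteq> set (concat cs)"
proof (induction cs)
  case Nil then show ?case by (simp add: transp_list_def pair_elems_def)
next
  case (Cons cl cs)
  have "pair_elems (transp_list (cl # cs)) =
      pair_elems (zip cl (tl cl)) \<union> pair_elems (transp_list cs)"
    by (simp add: transp_list_Cons pair_elems_def image_Un Un_ac)
  then show ?case using pair_elems_zip_tl[of cl] Cons by auto
qed

lemma fresh_pairs_transp_list: "distinct (concat cs) \<Longrightarrow> fresh_pairs (transp_list cs)"
proof (induction cs)
  case Nil then show ?case by (simp add: transp_list_def)
next
  case (Cons cl cs)
  have d: "distinct cl" "distinct (concat cs)" "set cl \<inter> set (concat cs) = {}"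
    using Cons.prems by auto
  show ?case unfolding transp_list_Cons
  proof (rule fresh_pairs_append)
    show "fresh_pairs (zip cl (tl cl))" by (rule fresh_pairs_zip_tl[OF d(1)])
    show "fresh_pairs (transp_list cs)" by (rule Cons.IH[OF d(2)])
    show "pair_elems (zip cl (tl cl)) \<inter> pair_elems (transp_list cs) = {}"
      using pair_elems_zip_tl[of cl] pair_elems_transp_list[of cs] d(3) by auto
  qed
qed

lemma tprod_fixed: "a \<notin> pair_elems ts \<Longrightarrow> tprod ts a = a"
proof (induction ts)
  case Nil then show ?case by (simp add: tprod_Nil)
next
  case (Cons e ts)
  obtain i j where e: "e = (i, j)" by (cases e)
  have "a \<notin> pair_elems ts" "a \<noteq> i" "a \<noteq> j" using Cons.prems e by (auto simp: pair_elems_def)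
  then show ?case using Cons.IH e by (simp add: tprod_Cons)
qed

fun twist_pairs :: "(nat \<times> nat) list \<Rightarrow> (nat \<Rightarrow> nat) \<Rightarrow> (nat \<times> nat) list" where
  "twist_pairs [] s = []"
| "twist_pairs ((i, j) # ts) s =
    (if same_cycle (tprod ts \<circ> s) i j then (i, j) # twist_pairs ts s else twist_pairs ts s)"

lemma set_twist_pairs_subset: "set (twist_pairs ts s) \<subseteq> set ts"
  by (induction ts s rule: twist_pairs.induct) auto

lemma twist_pairs_id: "fresh_pairs ts \<Longrightarrow> twist_pairs ts id = []"
proof (induction ts)
  case Nil then show ?case by simp
next
  case (Cons e ts)
  obtain a b where e: "e = (a, b)" by (cases e)
  have f: "a \<notin> pair_elems ts" "a \<noteq> b" "fresh_pairs ts" using Cons.prems e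
    by (auto simp: pair_elems_def)
  have fx: "tprod ts a = a" by (rule tprod_fixed[OF f(1)])
  have "((tprod ts \<circ> id) ^^ k) a = a" for k by (induction k) (simp_all add: fx)
  then have nsc: "\<not> same_cycle (tprod ts \<circ> id) a b" using f(2) by (simp add: same_cycle_def)
  have "twist_pairs (e # ts) id = twist_pairs ts id"
    by (simp only: e twist_pairs.simps nsc if_False)
  then show ?case using Cons.IH[OF f(3)] by (simp only:)
qed

definition edges :: "(nat \<times> nat) list \<Rightarrow> (nat \<times> nat) set" where
  "edges E = set E \<union> converse (set E)"

lemma edges_Cons: "edges ((i, j) # E) = edges E \<union> {(i, j), (j, i)}"
  by (auto simp: edges_def)

lemma rtrancl_Un_rtrancl_left: "(A\<^sup>* \<union> B)\<^sup>* = (A \<union> B)\<^sup>*"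
proof (rule rtrancl_subset)
  show "A \<union> B \<subseteq> A\<^sup>* \<union> B" by auto
  show "A\<^sup>* \<union> B \<subseteq> (A \<union> B)\<^sup>*" using rtrancl_mono[of A "A \<union> B"] by auto
qed

lemma rtrancl_Un_absorb: "B \<subseteq> A\<^sup>* \<Longrightarrow> (A \<union> B)\<^sup>* = A\<^sup>*"
  by (rule rtrancl_subset) auto

definition count_in :: "nat set \<Rightarrow> (nat \<times> nat) list \<Rightarrow> nat" where
  "count_in B E = length (filter (\<lambda>e. fst e \<in> B) E)"

lemma count_in_Cons: "count_in B ((i, j) # E) = (if i \<in> B then 1 else 0) + count_in B E"
  by (simp add: count_in_def)

lemma count_in_Un: "A \<inter> B = {} \<Longrightarrow> count_in (A \<union> B) E = count_in A E + count_in B E"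
  by (induction E) (auto simp: count_in_def)

section \<open>Partitions of the layers\<close>

locale layers =
  fixes n :: nat
begin

definition layer_partition :: "(nat \<times> nat) set \<Rightarrow> bool" where
  "layer_partition r \<longleftrightarrow> equiv UNIV r \<and> (\<forall>x y. (x, y) \<in> r \<longrightarrow> (x < n \<longleftrightarrow> y < n))"

definition blocks :: "(nat \<times> nat) set \<Rightarrow> nat set set" where
  "blocks r = (\<lambda>x. r `` {x}) ` {..<n}"

lemma layer_partition_refl: "layer_partition r \<Longrightarrow> (x, x) \<in> r"
  unfolding layer_partition_def equiv_def refl_on_def by blast

lemma layer_partition_sym: "layer_partition r \<Longrightarrow> (x, y) \<in> r \<Longrightarrow> (y, x) \<in> r"
  unfolding layer_partition_def equiv_def sym_def by blast

lemma layer_partition_trans: "layer_partition r \<Longrightarrow> (x, y) \<in> r \<Longrightarrow> (y, z) \<in> r \<Longrightarrow> (x, z) \<in> r"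
  unfolding layer_partition_def equiv_def trans_def by blast

lemma layer_partition_less: "layer_partition r \<Longrightarrow> (x, y) \<in> r \<Longrightarrow> x < n \<Longrightarrow> y < n"
  unfolding layer_partition_def by blast

lemma layer_partition_Image_eq: "layer_partition r \<Longrightarrow> (x, y) \<in> r \<Longrightarrow> r `` {x} = r `` {y}"
  by (auto intro: layer_partition_trans layer_partition_sym)

lemma layer_partition_rtrancl: "layer_partition r \<Longrightarrow> r\<^sup>* = r"
  by (auto simp: layer_partition_def equiv_def rtrancl_trancl_reflcl trancl_id refl_on_def
      simp del: reflcl_trancl)

lemma layer_partition_rtrancl_Un:
  assumes r: "layer_partition r" and s: "layer_partition s"
  shows "layer_partition ((r \<union> s)\<^sup>*)"
proof -
  have "sym (r \<union> s)" using layer_partition_sym[OF r] layer_partition_sym[OF s]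
    by (auto simp: sym_def)
  then have "equiv UNIV ((r \<union> s)\<^sup>*)" by (simp add: equiv_def refl_rtrancl sym_rtrancl trans_rtrancl)
  moreover have "x < n \<longleftrightarrow> y < n" if "(x, y) \<in> (r \<union> s)\<^sup>*" for x y
    using that by induction (auto dest: layer_partition_less[OF r] layer_partition_less[OF s]
        layer_partition_sym[OF r] layer_partition_sym[OF s])
  ultimately show ?thesis by (simp add: layer_partition_def)
qed

lemma finite_blocks: "finite (blocks r)" by (simp add: blocks_def)

lemma block_subset: "layer_partition r \<Longrightarrow> B \<in> blocks r \<Longrightarrow> B \<subseteq> {..<n}"
  unfolding blocks_def by (auto intro: layer_partition_less)

lemma finite_block: "layer_partition r \<Longrightarrow> B \<in> blocks r \<Longrightarrow> finite B"
  using block_subset finite_subset by blast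

lemma Image_in_blocks: "layer_partition r \<Longrightarrow> k < n \<Longrightarrow> r `` {k} \<in> blocks r \<and> k \<in> r `` {k}"
  unfolding blocks_def by (auto intro: layer_partition_refl)

lemma block_eq_Image: "layer_partition r \<Longrightarrow> B \<in> blocks r \<Longrightarrow> k \<in> B \<Longrightarrow> B = r `` {k}"
  unfolding blocks_def using layer_partition_Image_eq by fastforce

lemma block_nonempty: "layer_partition r \<Longrightarrow> B \<in> blocks r \<Longrightarrow> B \<noteq> {}"
  unfolding blocks_def by (auto intro: layer_partition_refl)

lemma blocks_disjoint:
  assumes "layer_partition r" "B \<in> blocks r" "B' \<in> blocks r" "B \<noteq> B'" shows "B \<inter> B' = {}"
  using block_eq_Image[OF assms(1)] assms(2-4) by blast

lemma Min_block:
  assumes "layer_partition r" "B \<in> blocks r"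
  shows "Min B \<in> B" "Min B < n" "r `` {Min B} = B"
proof -
  show m: "Min B \<in> B" using Min_in[OF finite_block[OF assms] block_nonempty[OF assms]] .
  show "Min B < n" using block_subset[OF assms] m by auto
  show "r `` {Min B} = B" using block_eq_Image[OF assms m] by simp
qed

lemma Union_blocks_refine:
  assumes "layer_partition r" "layer_partition R" "r \<subseteq> R" "B \<in> blocks R"
  shows "\<Union>{Ob \<in> blocks r. Ob \<subseteq> B} = B"
proof
  show "B \<subseteq> \<Union>{Ob \<in> blocks r. Ob \<subseteq> B}"
  proof
    fix x assume x: "x \<in> B"
    have "r `` {x} \<subseteq> B"
      using assms(3) block_eq_Image[OF assms(2,4) x] by auto
    moreover have "r `` {x} \<in> blocks r" "x \<in> r `` {x}"
      using Image_in_blocks[OF assms(1)] block_subset[OF assms(2,4)] x by auto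
    ultimately show "x \<in> \<Union>{Ob \<in> blocks r. Ob \<subseteq> B}" by blast
  qed
qed auto

definition join :: "(nat \<times> nat) set \<Rightarrow> nat \<Rightarrow> nat \<Rightarrow> (nat \<times> nat) set" where
  "join r i j = (r \<union> {(i, j), (j, i)})\<^sup>*"

lemma join_iff:
  assumes "layer_partition r"
  shows "(x, y) \<in> join r i j \<longleftrightarrow> (x, y) \<in> r \<or> ((x, i) \<in> r \<and> (j, y) \<in> r) \<or> ((x, j) \<in> r \<and> (i, y) \<in> r)"
proof
  assume "(x, y) \<in> join r i j"
  then show "(x, y) \<in> r \<or> ((x, i) \<in> r \<and> (j, y) \<in> r) \<or> ((x, j) \<in> r \<and> (i, y) \<in> r)"
    unfolding join_def
  proof (induction rule: rtrancl_induct)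
    case base then show ?case using layer_partition_refl[OF assms] by blast
  next
    case (step y z)
    from step.hyps(2) step.IH show ?case
      using layer_partition_trans[OF assms] layer_partition_refl[OF assms] by blast
  qed
next
  assume a: "(x, y) \<in> r \<or> ((x, i) \<in> r \<and> (j, y) \<in> r) \<or> ((x, j) \<in> r \<and> (i, y) \<in> r)"
  have sub: "r \<subseteq> join r i j" unfolding join_def by auto
  have ij: "(i, j) \<in> join r i j" "(j, i) \<in> join r i j" unfolding join_def by auto
  show "(x, y) \<in> join r i j"
    using a sub ij unfolding join_def by (meson rtrancl_trans subsetD)
qed

lemma layer_partition_join:
  assumes P: "layer_partition r" and "i < n" "j < n"
  shows "layer_partition (join r i j)"
proof -
  have "sym (r \<union> {(i, j), (j, i)})" using layer_partition_sym[OF P] by (auto simp: sym_def)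
  then have "equiv UNIV (join r i j)"
    unfolding join_def by (simp add: equiv_def refl_rtrancl sym_rtrancl trans_rtrancl)
  moreover have "x < n \<longleftrightarrow> y < n" if "(x, y) \<in> join r i j" for x y
    using that assms layer_partition_less[OF P] layer_partition_sym[OF P]
      unfolding join_iff[OF P] by blast
  ultimately show ?thesis by (simp add: layer_partition_def)
qed

lemma join_absorb:
  assumes P: "layer_partition r" and ij: "(i, j) \<in> r"
  shows "join r i j = r"
proof -
  have "{(i, j), (j, i)} \<subseteq> r\<^sup>*" using ij layer_partition_sym[OF P ij] by auto
  then have "join r i j = r\<^sup>*" unfolding join_def by (rule rtrancl_Un_absorb)
  then show ?thesis by (simp add: layer_partition_rtrancl[OF P])
qed

lemma join_Image:
  assumes P: "layer_partition r"
  shows "join r i j `` {x} = (if (x, i) \<in> r \<or> (x, j) \<in> r then r `` {i} \<union> r `` {j} else r `` {x})"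
proof (cases "(x, i) \<in> r \<or> (x, j) \<in> r")
  case True
  then show ?thesis unfolding set_eq_iff Image_singleton_iff join_iff[OF P]
    by (auto intro: layer_partition_trans[OF P] dest: layer_partition_sym[OF P])
next
  case False
  then show ?thesis unfolding set_eq_iff Image_singleton_iff join_iff[OF P] by auto
qed

lemma blocks_join:
  assumes P: "layer_partition r" and ij: "i < n" "j < n"
  shows "blocks (join r i j) = insert (r `` {i} \<union> r `` {j}) (blocks r - {r `` {i}, r `` {j}})"
proof -
  have touch: "(x, i) \<in> r \<or> (x, j) \<in> r \<longleftrightarrow> r `` {x} = r `` {i} \<or> r `` {x} = r `` {j}" for x
    using layer_partition_Image_eq[OF P] layer_partition_refl[OF P] layer_partition_sym[OF P]
    by blast
  have "blocks (join r i j) = (\<lambda>x. if r `` {x} = r `` {i} \<or> r `` {x} = r `` {j}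
      then r `` {i} \<union> r `` {j} else r `` {x}) ` {..<n}"
    unfolding blocks_def join_Image[OF P] touch ..
  then show ?thesis using ij unfolding blocks_def by (auto simp: image_iff)
qed

lemma prod_blocks_join:
  assumes P: "layer_partition r" and ij: "i < n" "j < n" "(i, j) \<notin> r"
  shows "(\<Prod>B\<in>blocks (join r i j). g B) =
      g (r `` {i} \<union> r `` {j}) * (\<Prod>B\<in>blocks r - {r `` {i}, r `` {j}}. g B)"
proof -
  have "r `` {i} \<union> r `` {j} \<notin> blocks r"
    using block_eq_Image[OF P, of "r `` {i} \<union> r `` {j}" i] layer_partition_refl[OF P] ij(3) by blast
  then show ?thesis by (simp add: blocks_join[OF P ij(1,2)] finite_blocks)
qed

definition proper_pairs :: "(nat \<times> nat) list \<Rightarrow> bool" where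
  "proper_pairs E \<longleftrightarrow> (\<forall>(i, j)\<in>set E. i < n \<and> j < n \<and> i \<noteq> j)"

lemma proper_pairs_Cons: "proper_pairs ((i, j) # E) \<longleftrightarrow> i < n \<and> j < n \<and> i \<noteq> j \<and> proper_pairs E"
  by (auto simp: proper_pairs_def)

lemma proper_pairs_subset: "proper_pairs E \<Longrightarrow> set E' \<subseteq> set E \<Longrightarrow> proper_pairs E'"
  by (auto simp: proper_pairs_def)

fun joins :: "(nat \<times> nat) set \<Rightarrow> (nat \<times> nat) list \<Rightarrow> (nat \<times> nat) set" where
  "joins r [] = r"
| "joins r ((i, j) # E) = join (joins r E) i j"

lemma layer_partition_joins: "layer_partition r \<Longrightarrow> proper_pairs E \<Longrightarrow> layer_partition (joins r E)"
proof (induction E)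
  case Nil then show ?case by simp
next
  case (Cons e E) then show ?case
    by (cases e) (auto simp: proper_pairs_Cons intro!: layer_partition_join)
qed

lemma joins_eq_rtrancl: "layer_partition r \<Longrightarrow> proper_pairs E \<Longrightarrow> joins r E = (r \<union> edges E)\<^sup>*"
proof (induction E)
  case Nil then show ?case by (simp add: edges_def layer_partition_rtrancl)
next
  case (Cons e E)
  obtain i j where e: "e = (i, j)" by (cases e)
  have g: "proper_pairs E" using Cons.prems e by (simp add: proper_pairs_Cons)
  have "joins r (e # E) = ((r \<union> edges E)\<^sup>* \<union> {(i, j), (j, i)})\<^sup>*"
    using e Cons.IH[OF Cons.prems(1) g] by (simp add: join_def)
  also have "\<dots> = (r \<union> edges E \<union> {(i, j), (j, i)})\<^sup>*" by (rule rtrancl_Un_rtrancl_left)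
  also have "\<dots> = (r \<union> edges (e # E))\<^sup>*" by (simp only: e edges_Cons Un_assoc)
  finally show ?case .
qed

lemma subset_joins: "layer_partition r \<Longrightarrow> proper_pairs E \<Longrightarrow> r \<subseteq> joins r E"
  by (simp add: joins_eq_rtrancl) (auto)

text \<open>Multiplying by \<open>\<Omega>\<^sub>(\<^sub>i\<^sub>j\<^sub>)\<close> merges the blocks of \<open>i\<close> and \<open>j\<close>, or, if they already share a
  block, leaves one factor \<open>\<omega>\<close> on it. After multiplying by the \<open>\<Omega>\<close>'s of \<open>E\<close> (the last pair first),
  \<open>joins r E\<close> is the resulting partition and \<open>omega_count r E x\<close> the number of factors \<open>\<omega>\<close>
  on the block of \<open>x\<close>.\<close>

fun omega_count :: "(nat \<times> nat) set \<Rightarrow> (nat \<times> nat) list \<Rightarrow> nat \<Rightarrow> nat" where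
  "omega_count r [] x = 0"
| "omega_count r ((i, j) # E) x =
    (if (x, i) \<in> joins r E \<or> (x, j) \<in> joins r E then
       (if (i, j) \<in> joins r E then omega_count r E i + 1
        else omega_count r E i + omega_count r E j)
     else omega_count r E x)"

lemma omega_count_cong:
  assumes "layer_partition r" "proper_pairs E" "(x, y) \<in> joins r E"
  shows "omega_count r E x = omega_count r E y"
  using assms(2,3)
proof (induction E arbitrary: x y)
  case Nil
  then show ?case by simp
next
  case (Cons e E)
  obtain i j where e: "e = (i, j)" by (cases e)
  have g: "proper_pairs E" using Cons.prems(1) e by (simp add: proper_pairs_Cons)
  let ?Q = "joins r E"
  have P: "layer_partition ?Q" by (rule layer_partition_joins[OF assms(1) g])
  have xy: "(x, y) \<in> ?Q \<or> ((x, i) \<in> ?Q \<and> (j, y) \<in> ?Q) \<or> ((x, j) \<in> ?Q \<and> (i, y) \<in> ?Q)"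
    using Cons.prems(2) e join_iff[OF P] by simp
  then have "(x, i) \<in> ?Q \<or> (x, j) \<in> ?Q \<longleftrightarrow> (y, i) \<in> ?Q \<or> (y, j) \<in> ?Q"
    by (blast intro: layer_partition_trans[OF P] dest: layer_partition_sym[OF P])
  moreover have "(x, y) \<in> ?Q" if "\<not> ((x, i) \<in> ?Q \<or> (x, j) \<in> ?Q)" using xy that by blast
  ultimately show ?case using e Cons.IH[OF g] by auto
qed

definition nblocks_in :: "(nat \<times> nat) set \<Rightarrow> nat set \<Rightarrow> nat" where
  "nblocks_in r B = card {Ob \<in> blocks r. Ob \<subseteq> B}"

lemma nblocks_in_join:
  assumes P: "layer_partition r" and ij: "i < n" "j < n" "(i, j) \<notin> r"
    and cl: "\<And>x y. (x, y) \<in> r \<Longrightarrow> x \<in> B \<longleftrightarrow> y \<in> B" and B: "i \<in> B \<longleftrightarrow> j \<in> B"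
  shows "nblocks_in (join r i j) B + (if i \<in> B then 1 else 0) = nblocks_in r B"
proof -
  let ?S = "{Ob \<in> blocks r. Ob \<subseteq> B}" and ?Bi = "r `` {i}" and ?Bj = "r `` {j}"
  have Bi: "?Bi \<in> blocks r" "i \<in> ?Bi" and Bj: "?Bj \<in> blocks r" "j \<in> ?Bj"
    using Image_in_blocks[OF P] ij by auto
  have BiBj: "?Bi \<noteq> ?Bj" using ij(3) Bj(2) by auto
  have new: "?Bi \<union> ?Bj \<notin> blocks r"
    using block_eq_Image[OF P _ Bi(2)[THEN UnI1]] Bj(2) ij(3) by blast
  have sub: "?Bi \<subseteq> B \<longleftrightarrow> i \<in> B" "?Bj \<subseteq> B \<longleftrightarrow> i \<in> B"
    using cl[of i] cl[of j] Bi(2) Bj(2) B by blast+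
  have S': "{Ob \<in> blocks (join r i j). Ob \<subseteq> B}
      = {Ob \<in> insert (?Bi \<union> ?Bj) (blocks r - {?Bi, ?Bj}). Ob \<subseteq> B}"
    by (simp only: blocks_join[OF P ij(1,2)])
  show ?thesis
  proof (cases "i \<in> B")
    case True
    then have S: "{Ob \<in> blocks (join r i j). Ob \<subseteq> B} = insert (?Bi \<union> ?Bj) (?S - {?Bi, ?Bj})"
      using S' sub by auto
    have "{?Bi, ?Bj} \<subseteq> ?S" using True sub Bi(1) Bj(1) by auto
    then have "card (?S - {?Bi, ?Bj}) + 2 = card ?S"
      using BiBj card_Diff_subset[of "{?Bi, ?Bj}" ?S] card_mono[of ?S "{?Bi, ?Bj}"]
          finite_blocks by auto
    then show ?thesis
      using S True new finite_blocks by (simp add: nblocks_in_def)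
  next
    case False
    then have "{Ob \<in> blocks (join r i j). Ob \<subseteq> B} = ?S"
      using S' sub Bi(2) by auto
    then show ?thesis using False by (simp add: nblocks_in_def)
  qed
qed

lemma nblocks_in_block:
  assumes "layer_partition r" "x < n" shows "nblocks_in r (r `` {x}) = 1"
proof -
  have "{Ob \<in> blocks r. Ob \<subseteq> r `` {x}} = {r `` {x}}"
  proof
    show "{Ob \<in> blocks r. Ob \<subseteq> r `` {x}} \<subseteq> {r `` {x}}"
    proof
      fix Ob assume Ob: "Ob \<in> {Ob \<in> blocks r. Ob \<subseteq> r `` {x}}"
      then obtain y where y: "y \<in> Ob" using block_nonempty[OF assms(1)] by blast
      have "Ob = r `` {y}" using block_eq_Image[OF assms(1)] Ob y by blast
      moreover have "(x, y) \<in> r" using Ob y by auto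
      ultimately show "Ob \<in> {r `` {x}}" using layer_partition_Image_eq[OF assms(1)] by auto
    qed
    show "{r `` {x}} \<subseteq> {Ob \<in> blocks r. Ob \<subseteq> r `` {x}}" using Image_in_blocks[OF assms] by auto
  qed
  then show ?thesis by (simp add: nblocks_in_def)
qed

lemma nblocks_in_Un:
  assumes "layer_partition r" "layer_partition Q" "r \<subseteq> Q" "B1 \<in> blocks Q" "B2 \<in> blocks Q" "B1 \<noteq> B2"
  shows "nblocks_in r (B1 \<union> B2) = nblocks_in r B1 + nblocks_in r B2"
proof -
  have disj: "B1 \<inter> B2 = {}" by (rule blocks_disjoint[OF assms(2,4,5,6)])
  have eq: "{Ob \<in> blocks r. Ob \<subseteq> B1 \<union> B2} = {Ob \<in> blocks r. Ob \<subseteq> B1} \<union> {Ob \<in> blocks r. Ob \<subseteq> B2}"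
  proof
    show "{Ob \<in> blocks r. Ob \<subseteq> B1 \<union> B2} \<subseteq> {Ob \<in> blocks r. Ob \<subseteq> B1} \<union> {Ob \<in> blocks r. Ob \<subseteq> B2}"
    proof
      fix Ob assume Ob: "Ob \<in> {Ob \<in> blocks r. Ob \<subseteq> B1 \<union> B2}"
      then obtain y where y: "y \<in> Ob" using block_nonempty[OF assms(1)] by blast
      have Oby: "Ob = r `` {y}" using block_eq_Image[OF assms(1)] Ob y by blast
      have sub: "Ob \<subseteq> Q `` {y}" using Oby assms(3) by auto
      have "y \<in> B1 \<or> y \<in> B2" using Ob y by auto
      then show "Ob \<in> {Ob \<in> blocks r. Ob \<subseteq> B1} \<union> {Ob \<in> blocks r. Ob \<subseteq> B2}"
        using block_eq_Image[OF assms(2) assms(4)] block_eq_Image[OF assms(2) assms(5)]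
            sub Ob by auto
    qed
  qed auto
  have d2: "{Ob \<in> blocks r. Ob \<subseteq> B1} \<inter> {Ob \<in> blocks r. Ob \<subseteq> B2} = {}"
  proof (rule ccontr)
    assume "{Ob \<in> blocks r. Ob \<subseteq> B1} \<inter> {Ob \<in> blocks r. Ob \<subseteq> B2} \<noteq> {}"
    then obtain Ob where "Ob \<in> blocks r" "Ob \<subseteq> B1" "Ob \<subseteq> B2" by auto
    moreover obtain y where "y \<in> Ob" using block_nonempty[OF assms(1) calculation(1)] by blast
    ultimately show False using disj by blast
  qed
  show ?thesis unfolding nblocks_in_def eq by (rule card_Un_disjoint) (use finite_blocks d2 in auto)
qed

lemma omega_count_formula:
  assumes "layer_partition r" "proper_pairs E" "x < n"
  shows "omega_count r E x + nblocks_in r (joins r E `` {x}) = count_in (joins r E `` {x}) E + 1"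
  using assms(2,3)
proof (induction E arbitrary: x)
  case Nil
  then show ?case using nblocks_in_block[OF assms(1)] by (simp add: count_in_def)
next
  case (Cons e E)
  obtain i j where e: "e = (i, j)" by (cases e)
  have g: "proper_pairs E" "i < n" "j < n" using Cons.prems e by (auto simp: proper_pairs_Cons)
  let ?Q = "joins r E"
  have P: "layer_partition ?Q" by (rule layer_partition_joins[OF assms(1) g(1)])
  have i: "i \<in> ?Q `` {i}" using layer_partition_refl[OF P] by simp
  have IH: "omega_count r E y + nblocks_in r (?Q `` {y}) = count_in (?Q `` {y}) E + 1"
      if "y < n" for y
    by (rule Cons.IH[OF g(1) that])
  have Image: "joins r (e # E) `` {x} =
      (if (x, i) \<in> ?Q \<or> (x, j) \<in> ?Q then ?Q `` {i} \<union> ?Q `` {j} else ?Q `` {x})"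
    using join_Image[OF P] e by simp
  consider (apart) "\<not> ((x, i) \<in> ?Q \<or> (x, j) \<in> ?Q)"
    | (closed) "(x, i) \<in> ?Q \<or> (x, j) \<in> ?Q" "(i, j) \<in> ?Q"
    | (merged) "(x, i) \<in> ?Q \<or> (x, j) \<in> ?Q" "(i, j) \<notin> ?Q"
    by blast
  then show ?case
  proof cases
    case apart
    then have "i \<notin> ?Q `` {x}" by simp
    then show ?thesis using IH[OF Cons.prems(2)] Image apart e by (simp add: count_in_Cons)
  next
    case closed
    then have "?Q `` {x} = ?Q `` {i}" "?Q `` {j} = ?Q `` {i}"
      using layer_partition_Image_eq[OF P] layer_partition_sym[OF P]
          layer_partition_trans[OF P] by metis+
    then show ?thesis using IH[OF g(2)] Image closed e i by (simp add: count_in_Cons)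
  next
    case merged
    have B: "?Q `` {i} \<in> blocks ?Q" "?Q `` {j} \<in> blocks ?Q"
      using Image_in_blocks[OF P] g(2,3) by auto
    have ne: "?Q `` {i} \<noteq> ?Q `` {j}" using merged(2) layer_partition_refl[OF P, of j] by auto
    show ?thesis
      using IH[OF g(2)] IH[OF g(3)] Image merged e i count_in_Un[OF blocks_disjoint[OF P B ne]]
        nblocks_in_Un[OF assms(1) P subset_joins[OF assms(1) g(1)] B ne]
      by (simp add: count_in_Cons)
  qed
qed

lemma layer_partition_cycle_rel:
  assumes "p permutes {..<n}" shows "layer_partition (cycle_rel p)"
  unfolding layer_partition_def
proof (intro conjI allI impI)
  show "equiv UNIV (cycle_rel p)"
  proof (rule equivI)
    show "cycle_rel p \<subseteq> UNIV \<times> UNIV" by simp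
    show "refl (cycle_rel p)" unfolding refl_on_def using cycle_rel_refl by blast
    show "sym (cycle_rel p)" unfolding sym_def using cycle_rel_sym[OF assms] by blast
    show "trans (cycle_rel p)" unfolding trans_def using cycle_rel_trans by blast
  qed
  fix x y assume "(x, y) \<in> cycle_rel p" then show "(x < n) = (y < n)"
    by (rule cycle_rel_less[OF assms])
qed

lemma layer_partition_cycle_rels:
  assumes "r permutes {..<n}" "s permutes {..<n}"
  shows "layer_partition ((cycle_rel s \<union> cycle_rel r)\<^sup>*)"
  using layer_partition_cycle_rel[OF assms(2)] layer_partition_cycle_rel[OF assms(1)]
  by (rule layer_partition_rtrancl_Un)

lemma block_cycle_rel_closed:
  assumes "layer_partition R" "cycle_rel p \<subseteq> R" "B \<in> blocks R"
  shows "p x \<in> B \<longleftrightarrow> x \<in> B"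
  using block_eq_Image[OF assms(1,3)] cycle_rel_step[of x p] assms(2)
    layer_partition_trans[OF assms(1)] layer_partition_sym[OF assms(1)]
  by (metis Image_singleton_iff subsetD)

lemma orbits_eq_blocks: "orbits n p = blocks (cycle_rel p)"
  unfolding orbits_def blocks_def cycle_rel_def by auto

lemma fixvecs_cycle_rel:
  assumes "p permutes {..<n}" "a \<in> fixvecs one n p" "(x, y) \<in> cycle_rel p" "x < n"
  shows "a y = a x"
proof -
  obtain k where k: "(p ^^ k) x = y" using assms(3) unfolding cycle_rel_def by auto
  have "a ((p ^^ k) x) = a x" for k
  proof (induction k)
    case 0 then show ?case by simp
  next
    case (Suc k)
    have "(p ^^ k) x < n" using cycle_rel_less[OF assms(1) cycle_rel_funpow] assms(4) by blast
    then have "a (p ((p ^^ k) x)) = a ((p ^^ k) x)" using assms(2) unfolding fixvecs_def by auto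
    then show ?case using Suc by simp
  qed
  then show ?thesis using k by blast
qed

lemma act_vec_fixvecs:
  assumes "r permutes {..<n}" "s permutes {..<n}" "b \<in> fixvecs one n s"
  shows "act_vec r b \<in> fixvecs one n (r \<circ> s \<circ> inv r)"
proof -
  have ri: "inv r permutes {..<n}" by (rule permutes_inv[OF assms(1)])
  have ir: "inv r (r z) = z" for z using permutes_inverses(2)[OF assms(1)] .
  have V: "act_vec r b \<in> vecs one n"
    using assms(3) permutes_not_in[OF ri] by (auto simp: act_vec_def fixvecs_def vecs_def)
  have "act_vec r b ((r \<circ> s \<circ> inv r) i) = act_vec r b i" if "i < n" for i
  proof -
    have "inv r i < n" using permutes_in_image[OF ri] that by auto
    then show ?thesis using assms(3) by (simp add: act_vec_def ir fixvecs_def)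
  qed
  then show ?thesis using V by (simp add: fixvecs_def)
qed

lemma permutes_transpose_comp:
  assumes "p permutes {..<n}" "i < n" "j < n"
  shows "(transpose i j \<circ> p) permutes {..<n}"
  by (rule permutes_compose[OF assms(1) permutes_swap_id]) (use assms in auto)

lemma tprod_permutes: "proper_pairs ts \<Longrightarrow> tprod ts permutes {..<n}"
proof (induction ts)
  case Nil show ?case unfolding tprod_Nil by (rule permutes_id)
next
  case (Cons e ts)
  obtain i j where e: "e = (i, j)" by (cases e)
  have "proper_pairs ts" "i < n" "j < n" using Cons.prems e by (auto simp: proper_pairs_Cons)
  then have "(transpose i j \<circ> tprod ts) permutes {..<n}"
    using Cons.IH permutes_transpose_comp by blast
  then show ?case using e by (simp only: tprod_Cons)
qed

lemma cycle_rel_transpose_merged: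
  assumes "p permutes {..<n}" "i < n" "j < n" "i \<noteq> j" "(i, j) \<notin> cycle_rel p"
  shows "(i, j) \<in> cycle_rel (transpose i j \<circ> p)"
proof (rule ccontr)
  let ?q = "transpose i j \<circ> p"
  let ?S = "cycle_rel ?q `` {i}"
  assume nj: "(i, j) \<notin> cycle_rel ?q"
  have inS: "(p ^^ k) i \<in> ?S" for k
  proof (induction k)
    case 0 show ?case using cycle_rel_refl by simp
  next
    case (Suc k)
    let ?y = "(p ^^ k) i"
    have "p ?y \<noteq> j" using assms(5) cycle_rel_funpow[where x=i and p=p and k="Suc k"] by auto
    show ?case
    proof (cases "p ?y = i")
      case True then show ?thesis using cycle_rel_refl by simp
    next
      case False
      then have "?q ?y = p ?y" using \<open>p ?y \<noteq> j\<close> by (simp add: transpose_def)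
      moreover have "(?y, ?q ?y) \<in> cycle_rel ?q" by (rule cycle_rel_step)
      ultimately show ?thesis using Suc cycle_rel_trans by fastforce
    qed
  qed
  obtain m where m: "(p ^^ m) = id" "m > 0"
    using permutation_is_nilpotent assms(1) permutation_permutes by blast
  let ?y0 = "(p ^^ (m - 1)) i"
  have "p ?y0 = (p ^^ m) i" using m(2) by (metis Suc_pred' funpow.simps(2) o_apply)
  then have "p ?y0 = i" using m(1) by simp
  then have "?q ?y0 = j" by simp
  moreover have "(?y0, ?q ?y0) \<in> cycle_rel ?q" by (rule cycle_rel_step)
  ultimately have "(i, j) \<in> cycle_rel ?q" using inS[of "m - 1"] cycle_rel_trans by fastforce
  then show False using nj by simp
qed

lemma cycle_rel_transpose_subset: "cycle_rel (transpose i j \<circ> p) \<subseteq> join (cycle_rel p) i j"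
proof -
  have "(y, transpose i j (p y)) \<in> (cycle_rel p \<union> {(i, j), (j, i)})\<^sup>*" for y
  proof -
    have "(y, p y) \<in> (cycle_rel p \<union> {(i, j), (j, i)})\<^sup>*" using cycle_rel_step by blast
    moreover have "(p y, transpose i j (p y)) \<in> (cycle_rel p \<union> {(i, j), (j, i)})\<^sup>*"
      by (auto simp: transpose_def)
    ultimately show ?thesis by (rule rtrancl_trans)
  qed
  then show ?thesis
    unfolding cycle_rel_eq_rtrancl[of "transpose i j \<circ> p"] join_def
    by (auto intro!: rtrancl_subset_rtrancl)
qed

lemma cycle_rel_transpose_join:
  assumes "p permutes {..<n}" "i < n" "j < n" "i \<noteq> j" "(i, j) \<notin> cycle_rel p"
  shows "cycle_rel (transpose i j \<circ> p) = join (cycle_rel p) i j"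
proof
  let ?q = "transpose i j \<circ> p"
  have Pq: "layer_partition (cycle_rel ?q)"
    by (rule layer_partition_cycle_rel[OF permutes_transpose_comp[OF assms(1-3)]])
  have ij: "(i, j) \<in> cycle_rel ?q" by (rule cycle_rel_transpose_merged[OF assms])
  have "transpose i j \<circ> ?q = p" by (auto simp: fun_eq_iff)
  then have "cycle_rel p \<subseteq> cycle_rel ?q"
    using cycle_rel_transpose_subset[of i j ?q] join_absorb[OF Pq ij] by simp
  moreover have "(j, i) \<in> cycle_rel ?q" by (rule layer_partition_sym[OF Pq ij])
  ultimately have "join (cycle_rel p) i j \<subseteq> (cycle_rel ?q)\<^sup>*"
    unfolding join_def using ij by (intro rtrancl_mono) auto
  then show "join (cycle_rel p) i j \<subseteq> cycle_rel ?q" by (simp add: layer_partition_rtrancl[OF Pq])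
qed (rule cycle_rel_transpose_subset)

lemma cycle_rel_transpose_separated:
  assumes "p permutes {..<n}" "i < n" "j < n" "i \<noteq> j" "(i, j) \<in> cycle_rel p"
  shows "(i, j) \<notin> cycle_rel (transpose i j \<circ> p)"
proof
  let ?q = "transpose i j \<circ> p"
  assume qij: "(i, j) \<in> cycle_rel ?q"
  have ex: "\<exists>k. (p ^^ k) i = j" using assms(5) unfolding cycle_rel_def by auto
  define k0 where "k0 = (LEAST k. (p ^^ k) i = j)"
  have k0: "(p ^^ k0) i = j" unfolding k0_def by (rule LeastI_ex[OF ex])
  have mink: "(p ^^ k) i \<noteq> j" if "k < k0" for k using not_less_Least that unfolding k0_def by blast
  have k0pos: "k0 > 0" using k0 assms(4) by (cases k0) auto
  have noti: "(p ^^ k) i \<noteq> i" if "0 < k" "k < k0" for k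
  proof
    assume "(p ^^ k) i = i"
    then have "(p ^^ (k0 - k)) i = (p ^^ (k0 - k)) ((p ^^ k) i)" by simp
    also have "\<dots> = (p ^^ (k0 - k + k)) i" by (simp add: funpow_add)
    also have "k0 - k + k = k0" using that by simp
    finally have "(p ^^ (k0 - k)) i = j" using k0 by simp
    then show False using mink[of "k0 - k"] that by simp
  qed
  have agree: "(?q ^^ k) i = (p ^^ k) i" if "k < k0" for k
    using that
  proof (induction k)
    case 0 then show ?case by simp
  next
    case (Suc k)
    have "(p ^^ Suc k) i \<noteq> i" "(p ^^ Suc k) i \<noteq> j"
      using noti[of "Suc k"] mink[of "Suc k"] Suc.prems by auto
    then show ?case using Suc by (simp add: transpose_def)
  qed
  have "(?q ^^ k0) i = ?q ((?q ^^ (k0 - 1)) i)" using k0pos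
    by (metis Suc_pred' funpow.simps(2) o_apply)
  also have "\<dots> = ?q ((p ^^ (k0 - 1)) i)" using agree[of "k0 - 1"] k0pos by simp
  also have "p ((p ^^ (k0 - 1)) i) = (p ^^ k0) i" using k0pos
    by (metis Suc_pred' funpow.simps(2) o_apply)
  then have "?q ((p ^^ (k0 - 1)) i) = i" using k0 by simp
  finally have per: "(?q ^^ k0) i = i" .
  obtain m where m: "(?q ^^ m) i = j" using qij unfolding cycle_rel_def by auto
  have "(?q ^^ (m mod k0)) i = j"
    using funpow_mod_eq[where f="?q" and n=k0 and x=i and m=m, OF per] m by simp
  moreover have "m mod k0 < k0" using k0pos by simp
  ultimately have "(p ^^ (m mod k0)) i = j" using agree by simp
  then show False using mink \<open>m mod k0 < k0\<close> by blast
qed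

lemma cycle_rel_transpose_split:
  assumes "p permutes {..<n}" "i < n" "j < n" "i \<noteq> j" "(i, j) \<in> cycle_rel p"
  shows "cycle_rel p = join (cycle_rel (transpose i j \<circ> p)) i j"
    and "(i, j) \<notin> cycle_rel (transpose i j \<circ> p)"
proof -
  let ?q = "transpose i j \<circ> p"
  have qp: "?q permutes {..<n}" by (rule permutes_transpose_comp[OF assms(1-3)])
  show n: "(i, j) \<notin> cycle_rel ?q" by (rule cycle_rel_transpose_separated[OF assms])
  have "transpose i j \<circ> ?q = p" by (auto simp: fun_eq_iff transpose_def)
  then show "cycle_rel p = join (cycle_rel ?q) i j"
    using cycle_rel_transpose_join[OF qp assms(2-4) n] by simp
qed

lemma join_cycle_rel_transpose: "join (cycle_rel (transpose i j \<circ> p)) i j = join (cycle_rel p) i j"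
proof -
  have le: "join (cycle_rel (transpose i j \<circ> q)) i j \<subseteq> join (cycle_rel q) i j" for q
  proof -
    have "cycle_rel (transpose i j \<circ> q) \<union> {(i, j), (j, i)} \<subseteq> join (cycle_rel q) i j"
      using cycle_rel_transpose_subset[of i j q] by (auto simp: join_def)
    then show ?thesis unfolding join_def[of "cycle_rel (transpose i j \<circ> q)"]
      by (metis join_def rtrancl_idemp rtrancl_mono)
  qed
  have "transpose i j \<circ> (transpose i j \<circ> p) = p" by (auto simp: fun_eq_iff)
  then show ?thesis using le[of p] le[of "transpose i j \<circ> p"] by auto
qed

lemma rtrancl_cycle_rel_twist_pairs:
  assumes "s permutes {..<n}" "proper_pairs ts"
  shows "(cycle_rel (tprod ts \<circ> s) \<union> edges (twist_pairs ts s))\<^sup>* = (cycle_rel s \<union> edges ts)\<^sup>*"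
  using assms(2)
proof (induction ts)
  case Nil
  then show ?case by (simp add: tprod_Nil edges_def)
next
  case (Cons e ts)
  obtain i j where e: "e = (i, j)" by (cases e)
  have g: "proper_pairs ts" "i < n" "j < n" "i \<noteq> j" using Cons.prems e
    by (auto simp: proper_pairs_Cons)
  define p where "p = tprod ts \<circ> s"
  have p: "p permutes {..<n}" unfolding p_def
    by (rule permutes_compose[OF assms(1) tprod_permutes[OF g(1)]])
  let ?e = "{(i, j), (j, i)}" and ?E = "edges (twist_pairs ts s)"
  have "(cycle_rel (tprod (e # ts) \<circ> s) \<union> edges (twist_pairs (e # ts) s))\<^sup>*
      = (cycle_rel (transpose i j \<circ> p) \<union> ?e \<union> ?E)\<^sup>*"
  proof (cases "(i, j) \<in> cycle_rel p")
    case True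
    then have "twist_pairs (e # ts) s = (i, j) # twist_pairs ts s"
      using e by (simp add: same_cycle_iff_cycle_rel p_def)
    then show ?thesis using e by (simp add: tprod_Cons p_def o_assoc edges_Cons Un_ac)
  next
    case False
    then have "twist_pairs (e # ts) s = twist_pairs ts s"
      using e by (simp add: same_cycle_iff_cycle_rel p_def)
    moreover have "?e \<subseteq> (cycle_rel (transpose i j \<circ> p) \<union> ?E)\<^sup>*"
      using cycle_rel_transpose_merged[OF p g(2-4) False]
        cycle_rel_sym[OF permutes_transpose_comp[OF p g(2,3)] _
            cycle_rel_transpose_merged[OF p g(2-4) False]]
      by auto
    ultimately show ?thesis
      using e rtrancl_Un_absorb[of ?e "cycle_rel (transpose i j \<circ> p) \<union> ?E"]
      by (simp add: tprod_Cons p_def o_assoc Un_ac)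
  qed
  also have "\<dots> = (cycle_rel p \<union> ?e \<union> ?E)\<^sup>*"
    using rtrancl_Un_rtrancl_left[of "cycle_rel (transpose i j \<circ> p) \<union> ?e" ?E]
      rtrancl_Un_rtrancl_left[of "cycle_rel p \<union> ?e" ?E] join_cycle_rel_transpose[of i j p]
    unfolding join_def by simp
  also have "\<dots> = ((cycle_rel p \<union> ?E)\<^sup>* \<union> ?e)\<^sup>*"
    using rtrancl_Un_rtrancl_left[of "cycle_rel p \<union> ?E" ?e] by (simp add: Un_ac)
  also have "\<dots> = (cycle_rel s \<union> edges (e # ts))\<^sup>*"
    using Cons.IH[OF g(1), folded p_def] rtrancl_Un_rtrancl_left[of "cycle_rel s \<union> edges ts" ?e] e
    by (simp add: edges_Cons Un_ac)
  finally show ?case .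
qed

lemma nblocks_in_cycle_rel_transpose:
  assumes p: "p permutes {..<n}" and ij: "i < n" "j < n" "i \<noteq> j"
    and B: "i \<in> B \<longleftrightarrow> j \<in> B" "\<And>x. p x \<in> B \<longleftrightarrow> x \<in> B"
  shows "nblocks_in (cycle_rel (transpose i j \<circ> p)) B +
      (if i \<in> B \<and> (i, j) \<notin> cycle_rel p then 1 else 0)
       = nblocks_in (cycle_rel p) B + (if i \<in> B \<and> (i, j) \<in> cycle_rel p then 1 else 0)"
proof -
  let ?q = "transpose i j \<circ> p"
  have q: "?q permutes {..<n}" by (rule permutes_transpose_comp[OF p ij(1,2)])
  have "transpose i j y \<in> B \<longleftrightarrow> y \<in> B" for y
    using B(1) by (auto simp: transpose_def)
  then have qB: "?q x \<in> B \<longleftrightarrow> x \<in> B" for x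
    using B(2) by simp
  show ?thesis
  proof (cases "(i, j) \<in> cycle_rel p")
    case True
    note J = cycle_rel_transpose_split(1)[OF p ij True]
      and ij' = cycle_rel_transpose_split(2)[OF p ij True]
    have "nblocks_in (cycle_rel p) B + (if i \<in> B then 1 else 0) = nblocks_in (cycle_rel ?q) B"
      unfolding J
      using layer_partition_cycle_rel[OF q] ij(1,2) ij' cycle_rel_closed[of ?q, OF qB] B(1)
      by (rule nblocks_in_join)
    then show ?thesis using True by simp
  next
    case False
    have J: "cycle_rel ?q = join (cycle_rel p) i j"
      by (rule cycle_rel_transpose_join[OF p ij False])
    have "nblocks_in (cycle_rel ?q) B + (if i \<in> B then 1 else 0) = nblocks_in (cycle_rel p) B"
      unfolding J using layer_partition_cycle_rel[OF p] ij(1,2) False cycle_rel_closed[OF B(2)] B(1)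
      by (rule nblocks_in_join)
    then show ?thesis using False by simp
  qed
qed

lemma twist_pairs_count:
  assumes "s permutes {..<n}" "proper_pairs ts" "\<forall>(i, j)\<in>set ts. i \<in> B \<longleftrightarrow> j \<in> B"
    "\<And>x. s x \<in> B \<longleftrightarrow> x \<in> B"
  shows "2 * count_in B (twist_pairs ts s) + nblocks_in (cycle_rel s) B
    = count_in B ts + nblocks_in (cycle_rel (tprod ts \<circ> s)) B"
  using assms(2,3)
proof (induction ts)
  case Nil
  then show ?case by (simp add: count_in_def tprod_Nil)
next
  case (Cons e ts)
  obtain i j where e: "e = (i, j)" by (cases e)
  have g: "proper_pairs ts" "i < n" "j < n" "i \<noteq> j" using Cons.prems e
    by (auto simp: proper_pairs_Cons)
  have cl: "\<forall>(i, j)\<in>set ts. i \<in> B \<longleftrightarrow> j \<in> B" "i \<in> B \<longleftrightarrow> j \<in> B" using Cons.prems e by auto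
  define p where "p = tprod ts \<circ> s"
  have p: "p permutes {..<n}" unfolding p_def
    by (rule permutes_compose[OF assms(1) tprod_permutes[OF g(1)]])
  have pB: "p x \<in> B \<longleftrightarrow> x \<in> B" for x unfolding p_def using tprod_preserves[OF cl(1)] assms(4) by simp
  define q where "q = tprod (e # ts) \<circ> s"
  have "q = transpose i j \<circ> p" unfolding p_def q_def using e by (simp add: tprod_Cons o_assoc)
  then have N: "nblocks_in (cycle_rel q) B + (if i \<in> B \<and> (i, j) \<notin> cycle_rel p then 1 else 0)
      = nblocks_in (cycle_rel p) B + (if i \<in> B \<and> (i, j) \<in> cycle_rel p then 1 else 0)"
    using nblocks_in_cycle_rel_transpose[OF p g(2-4) cl(2) pB] by (simp only:)
  have C: "count_in B (e # ts) = count_in B ts + (if i \<in> B then 1 else 0)"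
    using e by (simp add: count_in_Cons)
  have S: "count_in B (twist_pairs (e # ts) s)
      = count_in B (twist_pairs ts s) + (if i \<in> B \<and> (i, j) \<in> cycle_rel p then 1 else 0)"
    using e by (simp add: same_cycle_iff_cycle_rel count_in_Cons p_def)
  show ?case
    unfolding q_def[symmetric] using Cons.IH[OF g(1) cl(1), folded p_def] N C S
    by (auto split: if_splits)
qed

lemma cycle_decomp_tprod:
  assumes "r permutes {..<n}" "cycle_decomp n r cs" shows "tprod (transp_list cs) = r"
proof
  fix x
  have "tprod (transp_list cs) x = (if x \<in> set (concat cs) then r x else x)"
    by (rule tprod_transp_list) (use assms(2) in \<open>auto simp: cycle_decomp_def\<close>)
  moreover have "r x = x" if "x \<notin> set (concat cs)"
  proof (cases "x < n")
    case True then show ?thesis using that assms(2) unfolding cycle_decomp_def by auto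
  next
    case False then show ?thesis using permutes_not_in[OF assms(1)] by auto
  qed
  ultimately show "tprod (transp_list cs) x = r x" by auto
qed

lemma cycle_decomp_less:
  assumes "r permutes {..<n}" "cycle_decomp n r cs" "cl \<in> set cs" "x \<in> set cl" "length cl \<ge> 2"
  shows "x < n"
proof -
  have d: "distinct cl" using assms(2,3) unfolding cycle_decomp_def by (metis distinct_concat_iff)
  obtain k where k: "k < length cl" "x = cl ! k" using assms(4) by (metis in_set_conv_nth)
  have rx: "r x = cl ! ((k + 1) mod length cl)" using assms(2,3) k
    unfolding cycle_decomp_def by auto
  have "(k + 1) mod length cl \<noteq> k"
  proof (cases "k + 1 < length cl")
    case True then show ?thesis by simp
  next
    case False
    then have "k + 1 = length cl" using k(1) by simp
    then show ?thesis using assms(5) by simp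
  qed
  moreover have "(k + 1) mod length cl < length cl"
  proof -
    have "length cl > 0" using k(1) by linarith
    then show ?thesis by (rule mod_less_divisor)
  qed
  ultimately have "cl ! ((k + 1) mod length cl) \<noteq> cl ! k" using k(1) d
    by (simp add: nth_eq_iff_index_eq)
  then have "r x \<noteq> x" using rx k by simp
  then show ?thesis using permutes_not_in[OF assms(1)] by auto
qed

lemma proper_pairs_transp_list:
  assumes "r permutes {..<n}" "cycle_decomp n r cs" shows "proper_pairs (transp_list cs)"
  unfolding proper_pairs_def
proof (intro ballI, clarify)
  fix a b assume ab: "(a, b) \<in> set (transp_list cs)"
  then obtain cl where cl: "cl \<in> set cs" "(a, b) \<in> set (zip cl (tl cl))"
    by (auto simp: transp_list_def)
  have zp: "a \<in> set cl" "b \<in> set cl" "length cl \<ge> 2" using zip_tl_mem[OF cl(2)] by auto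
  have d: "distinct cl" using assms(2) cl(1) unfolding cycle_decomp_def
    by (metis distinct_concat_iff)
  obtain k where "k + 1 < length cl" "a = cl ! k" "b = cl ! (k + 1)"
    using zip_tl_step[OF d cl(2)] by blast
  then have "a \<noteq> b" using d by (simp add: nth_eq_iff_index_eq)
  then show "a < n \<and> b < n \<and> a \<noteq> b" using cycle_decomp_less[OF assms cl(1)] zp by auto
qed

lemma cycle_decomp_fresh_pairs: "cycle_decomp n r cs \<Longrightarrow> fresh_pairs (transp_list cs)"
  by (rule fresh_pairs_transp_list) (simp add: cycle_decomp_def)

lemma cycle_rel_id: "cycle_rel id = Id" by (auto simp: cycle_rel_def)

lemma cycle_rel_eq_rtrancl_edges:
  assumes "r permutes {..<n}" "cycle_decomp n r cs"
  shows "cycle_rel r = (edges (transp_list cs))\<^sup>*"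
proof -
  let ?T = "transp_list cs"
  have "(cycle_rel (tprod ?T \<circ> id) \<union> edges (twist_pairs ?T id))\<^sup>* = (cycle_rel id \<union> edges ?T)\<^sup>*"
    by (rule rtrancl_cycle_rel_twist_pairs[OF permutes_id proper_pairs_transp_list[OF assms]])
  moreover have "twist_pairs ?T id = []"
    by (rule twist_pairs_id[OF cycle_decomp_fresh_pairs[OF assms(2)]])
  moreover have "tprod ?T \<circ> id = r" using cycle_decomp_tprod[OF assms] by simp
  ultimately have "(cycle_rel r)\<^sup>* = (Id \<union> edges ?T)\<^sup>*" by (simp add: edges_def cycle_rel_id)
  also have "\<dots> = (edges ?T)\<^sup>*" by (rule rtrancl_subset) auto
  finally show ?thesis
    using layer_partition_rtrancl[OF layer_partition_cycle_rel[OF assms(1)]] by simp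
qed

lemma nblocks_in_id:
  assumes "B \<subseteq> {..<n}" shows "nblocks_in (cycle_rel id) B = card B"
proof -
  have "{Ob \<in> blocks (cycle_rel id). Ob \<subseteq> B} = (\<lambda>x. {x}) ` B"
    using assms by (auto simp: blocks_def cycle_rel_id)
  then show ?thesis unfolding nblocks_in_def by (simp add: card_image)
qed

lemma cycle_decomp_count:
  assumes "r permutes {..<n}" "cycle_decomp n r cs" "B \<subseteq> {..<n}"
    "\<forall>(i, j)\<in>set (transp_list cs). i \<in> B \<longleftrightarrow> j \<in> B"
  shows "count_in B (transp_list cs) + nblocks_in (cycle_rel r) B = card B"
proof -
  let ?T = "transp_list cs"
  have "2 * count_in B (twist_pairs ?T id) + nblocks_in (cycle_rel id) B =
      count_in B ?T + nblocks_in (cycle_rel (tprod ?T \<circ> id)) B"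
    by (rule
        twist_pairs_count[OF permutes_id proper_pairs_transp_list[OF assms(1,2)] assms(4)]) simp
  then show ?thesis
    using twist_pairs_id[OF cycle_decomp_fresh_pairs[OF assms(2)]] cycle_decomp_tprod[OF assms(1,2)]
        nblocks_in_id[OF assms(3)]
    by (simp add: count_in_def)
qed

lemma blocks_conj:
  assumes "r permutes {..<n}" "s permutes {..<n}"
  shows "blocks (cycle_rel (r \<circ> s \<circ> inv r)) = (\<lambda>Ob. r ` Ob) ` blocks (cycle_rel s)"
proof -
  let ?c = "r \<circ> s \<circ> inv r"
  have ir: "r (inv r z) = z" for z using permutes_inverses(1)[OF assms(1)] .
  have cls: "cycle_rel ?c `` {r x} = r ` (cycle_rel s `` {x})" for x
  proof
    show "cycle_rel ?c `` {r x} \<subseteq> r ` (cycle_rel s `` {x})"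
    proof
      fix y assume "y \<in> cycle_rel ?c `` {r x}"
      then have "(r x, r (inv r y)) \<in> cycle_rel ?c" using ir by simp
      then have "(x, inv r y) \<in> cycle_rel s" using cycle_rel_conj[OF assms(1)] by blast
      then show "y \<in> r ` (cycle_rel s `` {x})" using ir by (metis ImageI imageI singletonI)
    qed
    show "r ` (cycle_rel s `` {x}) \<subseteq> cycle_rel ?c `` {r x}"
      using cycle_rel_conj[OF assms(1)] by auto
  qed
  have img: "r ` {..<n} = {..<n}" by (rule permutes_image[OF assms(1)])
  have "blocks (cycle_rel ?c) = (\<lambda>y. cycle_rel ?c `` {y}) ` (r ` {..<n})"
    unfolding blocks_def img ..
  also have "\<dots> = (\<lambda>x. r ` (cycle_rel s `` {x})) ` {..<n}" by (simp add: image_image cls)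
  also have "\<dots> = (\<lambda>Ob. r ` Ob) ` blocks (cycle_rel s)" by (simp add: blocks_def image_image)
  finally show ?thesis .
qed

lemma nblocks_in_conj:
  assumes "r permutes {..<n}" "s permutes {..<n}" "\<And>x. r x \<in> B \<longleftrightarrow> x \<in> B"
  shows "nblocks_in (cycle_rel (r \<circ> s \<circ> inv r)) B = nblocks_in (cycle_rel s) B"
proof -
  have inj: "inj r" using permutes_inj[OF assms(1)] .
  have sub: "r ` Ob \<subseteq> B \<longleftrightarrow> Ob \<subseteq> B" for Ob using assms(3) by auto
  have "{Ob \<in> blocks (cycle_rel (r \<circ> s \<circ> inv r)). Ob \<subseteq> B} =
      (\<lambda>Ob. r ` Ob) ` {Ob \<in> blocks (cycle_rel s). Ob \<subseteq> B}"
    unfolding blocks_conj[OF assms(1,2)] using sub by auto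
  moreover have "inj_on (\<lambda>Ob. r ` Ob) {Ob \<in> blocks (cycle_rel s). Ob \<subseteq> B}"
    using inj by (auto simp: inj_on_def inj_image_eq_iff)
  ultimately show ?thesis unfolding nblocks_in_def by (simp add: card_image)
qed

lemma joins_twist_pairs:
  assumes "r permutes {..<n}" "q permutes {..<n}" "cycle_decomp n r cs"
  shows "joins (cycle_rel (r \<circ> q)) (twist_pairs (transp_list cs) q) = (cycle_rel q \<union> cycle_rel r)\<^sup>*"
proof -
  let ?T = "transp_list cs"
  have T: "proper_pairs ?T" "tprod ?T = r"
    using proper_pairs_transp_list[OF assms(1,3)] cycle_decomp_tprod[OF assms(1,3)] by auto
  have "layer_partition (cycle_rel (r \<circ> q))"
    by (rule layer_partition_cycle_rel[OF permutes_compose[OF assms(2,1)]])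
  then have "joins (cycle_rel (r \<circ> q)) (twist_pairs ?T q) =
      (cycle_rel (tprod ?T \<circ> q) \<union> edges (twist_pairs ?T q))\<^sup>*"
    using joins_eq_rtrancl proper_pairs_subset[OF T(1) set_twist_pairs_subset] T(2) by simp
  also have "\<dots> = (cycle_rel q \<union> edges ?T)\<^sup>*"
    by (rule rtrancl_cycle_rel_twist_pairs[OF assms(2) T(1)])
  also have "\<dots> = (cycle_rel q \<union> (edges ?T)\<^sup>*)\<^sup>*"
    using rtrancl_Un_rtrancl_left[of "edges ?T" "cycle_rel q"] by (simp add: Un_commute)
  finally show ?thesis
    using cycle_rel_eq_rtrancl_edges[OF assms(1,3)] by simp
qed

lemma rtrancl_cycle_rel_conj:
  assumes "r permutes {..<n}"
  shows "(cycle_rel r \<union> cycle_rel (r \<circ> s \<circ> inv r))\<^sup>* = (cycle_rel s \<union> cycle_rel r)\<^sup>*"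
proof (rule subset_antisym; rule rtrancl_subset_rtrancl; safe)
  have ri: "r (inv r z) = z" and ir: "inv r (r z) = z" for z
    using permutes_inverses[OF assms] by auto
  have r_back: "(r x, x) \<in> cycle_rel r" for x
    using cycle_rel_sym[OF assms _ cycle_rel_step] by simp
  fix x y
  assume "(x, y) \<in> cycle_rel (r \<circ> s \<circ> inv r)"
  then have "(inv r x, inv r y) \<in> cycle_rel s"
    using cycle_rel_conj[OF assms, of "inv r x" "inv r y" s] ri by simp
  moreover have "(x, inv r x) \<in> cycle_rel r" "(inv r y, y) \<in> cycle_rel r"
    using r_back[of "inv r x"] cycle_rel_step[of "inv r y" r] ri by auto
  ultimately show "(x, y) \<in> (cycle_rel s \<union> cycle_rel r)\<^sup>*"
    by (meson UnCI r_into_rtrancl rtrancl_trans)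
next
  fix x y
  assume "(x, y) \<in> cycle_rel s"
  then have "(r x, r y) \<in> cycle_rel (r \<circ> s \<circ> inv r)"
    using cycle_rel_conj[OF assms] by blast
  moreover have "(x, r x) \<in> cycle_rel r" "(r y, y) \<in> cycle_rel r"
    using cycle_rel_step cycle_rel_sym[OF assms _ cycle_rel_step] by auto
  ultimately show "(x, y) \<in> (cycle_rel r \<union> cycle_rel (r \<circ> s \<circ> inv r))\<^sup>*"
    by (meson UnCI r_into_rtrancl rtrancl_trans)
qed auto

text \<open>On a block \<open>B\<close> of the group generated by \<open>r\<close> and \<open>q\<close>, this is the Riemann-Hurwitz formula
  \<open>2 - 2g = c(r) + c(q) + c(r q) - |B|\<close> for the surface glued from the permutation triple
  \<open>(r, q, (r q)\<inverse>)\<close>: the number of factors \<open>\<omega>\<close> left on \<open>B\<close> is its genus \<open>g\<close>.\<close>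

lemma omega_count_twist_pairs_genus:
  assumes "r permutes {..<n}" "q permutes {..<n}" "cycle_decomp n r cs" "k < n"
  defines "B \<equiv> (cycle_rel q \<union> cycle_rel r)\<^sup>* `` {k}"
  shows "2 * omega_count (cycle_rel (r \<circ> q)) (twist_pairs (transp_list cs) q) k
      + nblocks_in (cycle_rel r) B + nblocks_in (cycle_rel q) B + nblocks_in (cycle_rel (r \<circ> q)) B
    = card B + 2"
proof -
  let ?T = "transp_list cs" and ?E = "twist_pairs (transp_list cs) q"
  let ?R = "(cycle_rel q \<union> cycle_rel r)\<^sup>*"
  have T: "proper_pairs ?T" "tprod ?T = r"
    using proper_pairs_transp_list[OF assms(1,3)] cycle_decomp_tprod[OF assms(1,3)] by auto
  have E: "proper_pairs ?E" by (rule proper_pairs_subset[OF T(1) set_twist_pairs_subset])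
  have P: "layer_partition (cycle_rel (r \<circ> q))"
    by (rule layer_partition_cycle_rel[OF permutes_compose[OF assms(2,1)]])
  have J: "joins (cycle_rel (r \<circ> q)) ?E = ?R" by (rule joins_twist_pairs[OF assms(1-3)])
  have PR: "layer_partition ?R" using layer_partition_joins[OF P E] J by simp
  have closed: "y \<in> B \<longleftrightarrow> z \<in> B" if "(y, z) \<in> ?R" for y z
    using that layer_partition_trans[OF PR] layer_partition_sym[OF PR] unfolding B_def by blast
  have qB: "q x \<in> B \<longleftrightarrow> x \<in> B" for x
    using closed[of x "q x"] cycle_rel_step[of x q] by auto
  have TB: "\<forall>(i, j)\<in>set ?T. i \<in> B \<longleftrightarrow> j \<in> B"
  proof clarify
    fix i j assume "(i, j) \<in> set ?T"
    then have "(i, j) \<in> cycle_rel r"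
      using cycle_rel_eq_rtrancl_edges[OF assms(1,3)] by (auto simp: edges_def)
    then show "i \<in> B \<longleftrightarrow> j \<in> B" using closed by auto
  qed
  have Bsub: "B \<subseteq> {..<n}"
    using block_subset[OF PR] Image_in_blocks[OF PR assms(4)] unfolding B_def by blast
  have "2 * count_in B ?E + nblocks_in (cycle_rel q) B =
      count_in B ?T + nblocks_in (cycle_rel (r \<circ> q)) B"
    using twist_pairs_count[OF assms(2) T(1) TB qB] T(2) by simp
  moreover have "omega_count (cycle_rel (r \<circ> q)) ?E k + nblocks_in (cycle_rel (r \<circ> q)) B =
      count_in B ?E + 1"
    using omega_count_formula[OF P E assms(4)] J unfolding B_def by simp
  moreover have "count_in B ?T + nblocks_in (cycle_rel r) B = card B"
    by (rule cycle_decomp_count[OF assms(1,3) Bsub TB])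
  ultimately show ?thesis by linarith
qed

lemma omega_count_twist_pairs_conj:
  assumes "r permutes {..<n}" "s permutes {..<n}" "k < n"
    and "cycle_decomp n r cs1" "cycle_decomp n (r \<circ> s \<circ> inv r) cs2"
  shows "omega_count (cycle_rel (r \<circ> s)) (twist_pairs (transp_list cs1) s) k
    = omega_count (cycle_rel (r \<circ> s)) (twist_pairs (transp_list cs2) r) k"
proof -
  let ?c = "r \<circ> s \<circ> inv r"
  let ?R = "(cycle_rel s \<union> cycle_rel r)\<^sup>*"
  note c = conj_permutes[OF assms(1,2)]
  have PR: "layer_partition ?R"
    by (rule layer_partition_cycle_rels[OF assms(1,2)])
  have rB: "r x \<in> ?R `` {k} \<longleftrightarrow> x \<in> ?R `` {k}" for x
    using Image_in_blocks[OF PR assms(3)] by (intro block_cycle_rel_closed[OF PR]) auto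
  show ?thesis
    using omega_count_twist_pairs_genus[OF assms(1,2,4,3)]
      omega_count_twist_pairs_genus[OF c(1) assms(1,5,3)]
      nblocks_in_conj[OF assms(1,2) rB] rtrancl_cycle_rel_conj[OF assms(1), of s] c(2)
    by simp
qed

end

section \<open>Multilayer anyons\<close>

lemma prod_remove2:
  assumes "finite P" "a \<in> P" "b \<in> P" "a \<noteq> b"
  shows "prod f P = f a * (f b * prod f (P - {a, b}))"
  using assms
  by (simp add: prod.remove[of P a] prod.remove[of "P - {a}" b] Diff_insert2[symmetric] insert_commute)

locale multilayer = fusion_rules one dual N + layers n
  for one :: "'l::finite" and dual N n
begin

abbreviation V :: "(nat \<Rightarrow> 'l) set" where
  "V \<equiv> vecs one n"

abbreviation cmul :: "((nat \<Rightarrow> 'l) \<Rightarrow> int) \<Rightarrow> ((nat \<Rightarrow> 'l) \<Rightarrow> int) \<Rightarrow> (nat \<Rightarrow> 'l) \<Rightarrow> int" where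
  "cmul \<equiv> mulC one N n"

definition extend_one :: "(nat \<Rightarrow> 'l) \<Rightarrow> nat \<Rightarrow> 'l" where
  "extend_one c = (\<lambda>i. if i < n then c i else one)"

definition ptensor :: "(nat \<Rightarrow> 'l \<Rightarrow> int) \<Rightarrow> (nat \<Rightarrow> 'l) \<Rightarrow> int" where
  "ptensor f = (\<lambda>v. if v \<in> V then (\<Prod>i<n. f i (v i)) else 0)"

definition supported :: "((nat \<Rightarrow> 'l) \<Rightarrow> int) \<Rightarrow> bool" where
  "supported x \<longleftrightarrow> (\<forall>v. v \<notin> V \<longrightarrow> x v = 0)"

lemma in_V: "v \<in> V \<longleftrightarrow> (\<forall>i\<ge>n. v i = one)" by (simp add: vecs_def)

lemma extend_one_bij: "bij_betw extend_one (PiE {..<n} (\<lambda>_. UNIV)) V"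
  by (rule bij_betw_byWitness[of _ "\<lambda>v. restrict v {..<n}"])
     (auto simp: extend_one_def in_V PiE_def extensional_def fun_eq_iff)

lemma finite_V: "finite V"
proof -
  have "finite (PiE {..<n} (\<lambda>_. UNIV::'l set))" by (simp add: finite_PiE)
  then show ?thesis using bij_betw_finite[OF extend_one_bij] by simp
qed

lemma finite_fixvecs: "finite (fixvecs one n p)"
  using finite_V by (rule finite_subset[rotated]) (auto simp: fixvecs_def)

lemma sum_V_PiE: "(\<Sum>v\<in>V. g v) = (\<Sum>c\<in>PiE {..<n} (\<lambda>_. UNIV). g (extend_one c))"
  using sum.reindex_bij_betw[OF extend_one_bij, of g] by simp

lemma sum_V_prod: "(\<Sum>v\<in>V. \<Prod>i<n. h i (v i)) = (\<Prod>i<n. \<Sum>x\<in>UNIV. (h i x :: int))"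
proof -
  have "(\<Sum>v\<in>V. \<Prod>i<n. h i (v i)) = (\<Sum>c\<in>PiE {..<n} (\<lambda>_. UNIV). \<Prod>i<n. h i (extend_one c i))"
    by (rule sum_V_PiE)
  also have "\<dots> = (\<Sum>c\<in>PiE {..<n} (\<lambda>_. UNIV). \<Prod>i<n. h i (c i))"
    by (rule sum.cong[OF refl], rule prod.cong[OF refl]) (simp add: extend_one_def)
  also have "\<dots> = (\<Prod>i<n. \<Sum>x\<in>UNIV. h i x)"
    by (rule prod_sum_PiE[symmetric]) auto
  finally show ?thesis .
qed

lemma unit_in_V: "unitvec one \<in> V" by (simp add: in_V unitvec_def)

lemma prod_lbasis_V:
  assumes "v \<in> V" "w \<in> V"
  shows "(\<Prod>i<n. lbasis (v i) (w i)) = (if w = v then 1 else 0)"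
proof (cases "w = v")
  case True then show ?thesis by (simp add: basis_apply)
next
  case False
  then obtain i where "w i \<noteq> v i" by auto
  with assms have "i < n" by (metis in_V not_le)
  with \<open>w i \<noteq> v i\<close> have "lbasis (v i) (w i) = 0" by (simp add: basis_apply)
  with \<open>i < n\<close> False show ?thesis by (metis finite_lessThan lessThan_iff prod_zero_iff)
qed

lemma basis_eq_ptensor:
  assumes "v \<in> V" shows "basis v = ptensor (\<lambda>i. lbasis (v i))"
proof
  fix w
  show "basis v w = ptensor (\<lambda>i. lbasis (v i)) w"
  proof (cases "w \<in> V")
    case True then show ?thesis using prod_lbasis_V[OF assms True]
      by (simp add: ptensor_def basis_def)
  next
    case False then show ?thesis using assms by (auto simp: ptensor_def basis_def)
  qed
qed

lemma supported_mulC: "supported (cmul x y)" by (simp add: supported_def mulC_def)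

lemma supported_basis: "v \<in> V \<Longrightarrow> supported (basis v)" by (auto simp: supported_def basis_def)

lemma mulC_commute: "cmul x y = cmul y x"
proof
  fix c
  have "(\<Sum>a\<in>V. \<Sum>b\<in>V. x a * y b * (\<Prod>i<n. int (N (a i) (b i) (c i)))) =
        (\<Sum>b\<in>V. \<Sum>a\<in>V. x a * y b * (\<Prod>i<n. int (N (a i) (b i) (c i))))"
    by (rule sum.swap)
  also have "\<dots> = (\<Sum>a\<in>V. \<Sum>b\<in>V. y a * x b * (\<Prod>i<n. int (N (a i) (b i) (c i))))"
    by (simp add: N_commute mult_ac)
  finally show "cmul x y c = cmul y x c" unfolding mulC_def by simp
qed

lemma mulC_sum_left: "cmul (\<lambda>v. \<Sum>j\<in>S. g j v) y c = (\<Sum>j\<in>S. cmul (g j) y c)"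
  unfolding mulC_def by (simp add: sum_distrib_right sum.swap[of _ S])

lemma mulC_smult_left: "cmul (\<lambda>v. k * g v) y c = k * cmul g y c"
  unfolding mulC_def by (simp add: sum_distrib_left mult_ac)

lemma supported_decomp:
  assumes "supported x" shows "x = (\<lambda>w. \<Sum>v\<in>V. x v * ptensor (\<lambda>i. lbasis (v i)) w)"
proof
  fix w
  show "x w = (\<Sum>v\<in>V. x v * ptensor (\<lambda>i. lbasis (v i)) w)"
  proof (cases "w \<in> V")
    case True
    have "(\<Sum>v\<in>V. x v * ptensor (\<lambda>i. lbasis (v i)) w) = (\<Sum>v\<in>V. if v = w then x v else 0)"
      by (rule sum.cong[OF refl]) (use True prod_lbasis_V in \<open>auto simp: ptensor_def\<close>)
    also have "\<dots> = x w" using True by (simp add: sum.delta finite_V)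
    finally show ?thesis by simp
  next
    case False then show ?thesis using assms by (simp add: ptensor_def supported_def)
  qed
qed

lemma mulC_ptensor_left: "cmul (ptensor f) Y c =
    (\<Sum>w\<in>V. Y w * ptensor (\<lambda>i. fmul (f i) (lbasis (w i))) c)"
proof (cases "c \<in> V")
  case True
  have "cmul (ptensor f) Y c = (\<Sum>a\<in>V. \<Sum>b\<in>V. Y b * (\<Prod>i<n. f i (a i) * int (N (a i) (b i) (c i))))"
    using True unfolding mulC_def ptensor_def
    by (simp add: prod.distrib mult_ac)
  also have "\<dots> = (\<Sum>b\<in>V. \<Sum>a\<in>V. Y b * (\<Prod>i<n. f i (a i) * int (N (a i) (b i) (c i))))"
    by (rule sum.swap)
  also have "\<dots> = (\<Sum>b\<in>V. Y b * (\<Sum>a\<in>V. \<Prod>i<n. f i (a i) * int (N (a i) (b i) (c i))))"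
    by (simp add: sum_distrib_left)
  also have "\<dots> = (\<Sum>b\<in>V. Y b * (\<Prod>i<n. \<Sum>x\<in>UNIV. f i x * int (N x (b i) (c i))))"
    by (intro sum.cong refl arg_cong[where f="\<lambda>t. _ * t"] sum_V_prod)
  also have "\<dots> = (\<Sum>w\<in>V. Y w * ptensor (\<lambda>i. fmul (f i) (lbasis (w i))) c)"
    using True by (simp add: ptensor_def fmul_lbasis_right)
  finally show ?thesis .
next
  case False then show ?thesis by (simp add: mulC_def ptensor_def)
qed

lemma mulC_ptensor_ptensor: "cmul (ptensor f) (ptensor g) = ptensor (\<lambda>i. fmul (f i) (g i))"
proof
  fix c
  show "cmul (ptensor f) (ptensor g) c = ptensor (\<lambda>i. fmul (f i) (g i)) c"
  proof (cases "c \<in> V")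
    case True
    have "cmul (ptensor f) (ptensor g) c =
        (\<Sum>w\<in>V. \<Prod>i<n. g i (w i) * fmul (f i) (lbasis (w i)) (c i))"
      unfolding mulC_ptensor_left using True by (simp add: ptensor_def prod.distrib)
    also have "\<dots> = (\<Prod>i<n. \<Sum>x\<in>UNIV. g i x * fmul (f i) (lbasis x) (c i))"
      by (rule sum_V_prod)
    also have "\<dots> = ptensor (\<lambda>i. fmul (f i) (g i)) c"
      using True unfolding ptensor_def by (simp add: fmul_expand_right[of "f _" "g _"])
    finally show ?thesis .
  next
    case False then show ?thesis by (simp add: mulC_def ptensor_def)
  qed
qed

abbreviation layer_mult :: "(nat \<Rightarrow> 'l) \<Rightarrow> (nat \<Rightarrow> 'l) \<Rightarrow> (nat \<Rightarrow> 'l) \<Rightarrow> int" where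
  "layer_mult a b c \<equiv> (\<Prod>i<n. int (N (a i) (b i) (c i)))"

lemma layer_mult_assoc: "(\<Sum>e\<in>V. layer_mult a b e * layer_mult e u c) =
    (\<Sum>e\<in>V. layer_mult b u e * layer_mult a e c)"
proof -
  have "(\<Sum>e\<in>V. layer_mult a b e * layer_mult e u c) =
      (\<Sum>e\<in>V. \<Prod>i<n. int (N (a i) (b i) (e i)) * int (N (e i) (u i) (c i)))"
    by (simp add: prod.distrib)
  also have "\<dots> = (\<Prod>i<n. \<Sum>x\<in>UNIV. int (N (a i) (b i) x) * int (N x (u i) (c i)))"
    by (rule sum_V_prod)
  also have "\<dots> = (\<Prod>i<n. \<Sum>x\<in>UNIV. int (N (b i) (u i) x) * int (N (a i) x (c i)))"
  proof (rule prod.cong[OF refl])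
    fix i
    have "(\<Sum>x\<in>UNIV. int (N (a i) (b i) x) * int (N x (u i) (c i))) =
        int (\<Sum>x\<in>UNIV. N (a i) (b i) x * N x (u i) (c i))"
      by simp
    also have "\<dots> = int (\<Sum>x\<in>UNIV. N (b i) (u i) x * N (a i) x (c i))" by (simp only: N_assoc)
    finally show "(\<Sum>x\<in>UNIV. int (N (a i) (b i) x) * int (N x (u i) (c i))) =
        (\<Sum>x\<in>UNIV. int (N (b i) (u i) x) * int (N (a i) x (c i)))"
      by simp
  qed
  also have "\<dots> = (\<Sum>e\<in>V. \<Prod>i<n. int (N (b i) (u i) (e i)) * int (N (a i) (e i) (c i)))"
    by (rule sum_V_prod[symmetric])
  also have "\<dots> = (\<Sum>e\<in>V. layer_mult b u e * layer_mult a e c)"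
    by (simp add: prod.distrib)
  finally show ?thesis .
qed

lemma mulC_assoc: "cmul (cmul x y) z = cmul x (cmul y z)"
proof
  fix c
  show "cmul (cmul x y) z c = cmul x (cmul y z) c"
  proof (cases "c \<in> V")
    case True
    have "cmul (cmul x y) z c =
      (\<Sum>e\<in>V. \<Sum>u\<in>V. \<Sum>a\<in>V. \<Sum>b\<in>V. x a * y b * z u * (layer_mult a b e * layer_mult e u c))"
      using True unfolding mulC_def
      by (simp add: sum_distrib_left sum_distrib_right mult_ac cong: sum.cong)
    also have "\<dots> =
        (\<Sum>a\<in>V. \<Sum>b\<in>V. \<Sum>u\<in>V. \<Sum>e\<in>V. x a * y b * z u * (layer_mult a b e * layer_mult e u c))"
      by (rule sum_reorder4)
    also have "\<dots> =
        (\<Sum>a\<in>V. \<Sum>b\<in>V. \<Sum>u\<in>V. x a * y b * z u * (\<Sum>e\<in>V. layer_mult a b e * layer_mult e u c))"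
      by (simp add: sum_distrib_left)
    also have "\<dots> =
        (\<Sum>a\<in>V. \<Sum>b\<in>V. \<Sum>u\<in>V. x a * y b * z u * (\<Sum>e\<in>V. layer_mult b u e * layer_mult a e c))"
      by (simp only: layer_mult_assoc)
    also have "\<dots> =
        (\<Sum>a\<in>V. \<Sum>b\<in>V. \<Sum>u\<in>V. \<Sum>e\<in>V. x a * y b * z u * (layer_mult b u e * layer_mult a e c))"
      by (simp add: sum_distrib_left)
    also have "\<dots> =
        (\<Sum>a\<in>V. \<Sum>e\<in>V. \<Sum>b\<in>V. \<Sum>u\<in>V. x a * y b * z u * (layer_mult b u e * layer_mult a e c))"
      by (rule sum.cong[OF refl], rule sum_reorder3[symmetric])
    also have "\<dots> = cmul x (cmul y z) c"
      using True unfolding mulC_def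
      by (simp add: sum_distrib_left sum_distrib_right mult_ac cong: sum.cong)
    finally show ?thesis .
  next
    case False then show ?thesis by (simp add: mulC_def)
  qed
qed

lemma mulC_left_commute: "cmul x (cmul y z) = cmul y (cmul x z)"
  by (metis mulC_assoc mulC_commute)

lemma mulC_unit_left:
  assumes "supported X" shows "cmul (basis (unitvec one)) X = X"
proof
  fix c
  have "cmul (basis (unitvec one)) X c = cmul (ptensor (\<lambda>i. lbasis one)) X c"
    using basis_eq_ptensor[OF unit_in_V] by (simp add: unitvec_def)
  also have "\<dots> = (\<Sum>w\<in>V. X w * ptensor (\<lambda>i. lbasis (w i)) c)"
    by (simp add: mulC_ptensor_left fmul_one_left)
  also have "\<dots> = X c" using supported_decomp[OF assms] by metis
  finally show "cmul (basis (unitvec one)) X c = X c" .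
qed

subsection \<open>Unit coefficients of blockwise fusion\<close>

text \<open>\<open>counit r x\<close> is the coefficient of the unit in the confinement of \<open>x\<close> to the blocks of \<open>r\<close>,
  and \<open>counit_prod r f\<close> is its value on the product anyon \<open>ptensor f\<close>.\<close>

definition counit_prod :: "(nat \<times> nat) set \<Rightarrow> (nat \<Rightarrow> 'l \<Rightarrow> int) \<Rightarrow> int" where
  "counit_prod r f = (\<Prod>B\<in>blocks r. fusion.F f B one)"

definition counit :: "(nat \<times> nat) set \<Rightarrow> ((nat \<Rightarrow> 'l) \<Rightarrow> int) \<Rightarrow> int" where
  "counit r x = (\<Sum>v\<in>V. x v * counit_prod r (\<lambda>i. lbasis (v i)))"

lemma counit_prod_expand:
  assumes "layer_partition r" "k < n"
  shows "counit_prod r X = (\<Sum>x\<in>UNIV. X k x * counit_prod r (X(k := lbasis x)))"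
proof -
  have "(\<Prod>B\<in>blocks r. fmul (fusion.F X (id B)) ((\<lambda>_. lbasis one) B) one) =
      (\<Sum>x\<in>UNIV. X k x *
        (\<Prod>B\<in>blocks r. fmul (fusion.F (X(k := lbasis x)) (id B)) ((\<lambda>_. lbasis one) B) one))"
  proof (rule prod_fusion_expand)
    show "finite (blocks r)" by (rule finite_blocks)
    show "r `` {k} \<in> blocks r" "k \<in> id (r `` {k})" using Image_in_blocks[OF assms] by auto
    show "finite (id (r `` {k}))" using Image_in_blocks[OF assms] finite_block[OF assms(1)] by auto
    fix B assume "B \<in> blocks r" "B \<noteq> r `` {k}"
    then show "k \<notin> id B" using block_eq_Image[OF assms(1)] by auto
  qed
  then show ?thesis by (simp add: counit_prod_def fmul_one_right)
qed

lemma counit_prod_cong: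
  assumes "layer_partition r" "\<And>i. i < n \<Longrightarrow> f i = g i" shows "counit_prod r f = counit_prod r g"
  unfolding counit_prod_def
proof (rule prod.cong[OF refl])
  fix B assume "B \<in> blocks r"
  then have "B \<subseteq> {..<n}" by (rule block_subset[OF assms(1)])
  then have "fusion.F f B = fusion.F g B" using assms(2) by (intro fusion.cong) auto
  then show "fusion.F f B one = fusion.F g B one" by simp
qed

lemma ptensor_extend_one: "c \<in> PiE {..<n} (\<lambda>_. UNIV) \<Longrightarrow> ptensor f (extend_one c) = (\<Prod>i<n. f i (c i))"
  unfolding ptensor_def by (auto simp: in_V extend_one_def intro!: prod.cong)

lemma counit_ptensor:
  assumes "layer_partition r" shows "counit r (ptensor f) = counit_prod r f"
proof -
  have "counit_prod r f = (\<Sum>c\<in>PiE {..<n} (\<lambda>_. UNIV). (\<Prod>i\<in>{..<n}. f i (c i)) * counit_prod r (\<lambda>i.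
      if i \<in> {..<n} then lbasis (c i) else f i))"
    by (rule sum_PiE_expand[OF finite_lessThan]) (rule counit_prod_expand[OF assms], simp)
  also have "\<dots> =
      (\<Sum>c\<in>PiE {..<n} (\<lambda>_. UNIV). ptensor f (extend_one c) *
          counit_prod r (\<lambda>i. lbasis (extend_one c i)))"
  proof (rule sum.cong[OF refl])
    fix c :: "nat \<Rightarrow> 'l" assume c: "c \<in> PiE {..<n} (\<lambda>_. UNIV)"
    have "counit_prod r (\<lambda>i.
        if i \<in> {..<n} then lbasis (c i) else f i) = counit_prod r (\<lambda>i. lbasis (extend_one c i))"
      by (rule counit_prod_cong[OF assms]) (simp add: extend_one_def)
    then show "(\<Prod>i\<in>{..<n}. f i (c i)) * counit_prod r (\<lambda>i.
        if i \<in> {..<n} then lbasis (c i) else f i) =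
          ptensor f (extend_one c) * counit_prod r (\<lambda>i. lbasis (extend_one c i))"
      by (simp add: ptensor_extend_one[OF c])
  qed
  also have "\<dots> = counit r (ptensor f)"
    unfolding counit_def by (rule sum_V_PiE[symmetric])
  finally show ?thesis by simp
qed

lemma counit_sum: "counit r (\<lambda>v. \<Sum>j\<in>S. a j * g j v) = (\<Sum>j\<in>S. a j * counit r (g j))"
  unfolding counit_def by (simp add: sum_distrib_left sum_distrib_right sum.swap[of _ S] mult_ac)

lemma counit_mulC_ptensor:
  assumes "layer_partition r"
  shows "counit r (cmul (ptensor h) Y) =
    (\<Sum>w\<in>V. Y w * (\<Prod>B\<in>blocks r. fmul (fusion.F h B) (fusion.F (\<lambda>i. lbasis (w i)) B) one))"
proof -
  have "counit r (cmul (ptensor h) Y) =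
      counit r (\<lambda>c. \<Sum>w\<in>V. Y w * ptensor (\<lambda>i. fmul (h i) (lbasis (w i))) c)"
    by (rule arg_cong[where f="counit r"], rule ext, rule mulC_ptensor_left)
  also have "\<dots> = (\<Sum>w\<in>V. Y w * counit r (ptensor (\<lambda>i. fmul (h i) (lbasis (w i)))))"
    by (rule counit_sum)
  also have "\<dots> =
      (\<Sum>w\<in>V. Y w * (\<Prod>B\<in>blocks r. fmul (fusion.F h B) (fusion.F (\<lambda>i. lbasis (w i)) B) one))"
    by (simp add: counit_ptensor[OF assms] counit_prod_def fusion.distrib)
  finally show ?thesis .
qed

lemma counit_mulC_ptensor_cong:
  assumes "layer_partition r" "\<And>B. B \<in> blocks r \<Longrightarrow> fusion.F h B = fusion.F h' B"
  shows "counit r (cmul Y (ptensor h)) = counit r (cmul Y (ptensor h'))"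
  by (simp add: mulC_commute[of Y] counit_mulC_ptensor[OF assms(1)] assms(2))

lemma counit_mulC_expand:
  assumes "layer_partition R" "supported X"
  shows "counit R (cmul X Y) = (\<Sum>w\<in>V. Y w * (\<Sum>v\<in>V. X v *
     (\<Prod>B\<in>blocks R. fmul (fusion.F (\<lambda>i. lbasis (v i)) B) (fusion.F (\<lambda>i. lbasis (w i)) B) one)))"
proof -
  have "cmul X Y = (\<lambda>c. \<Sum>v\<in>V. X v * cmul (ptensor (\<lambda>i. lbasis (v i))) Y c)"
  proof
    fix c
    have "cmul X Y c = cmul (\<lambda>u. \<Sum>v\<in>V. X v * ptensor (\<lambda>i. lbasis (v i)) u) Y c"
      using supported_decomp[OF assms(2)] by metis
    also have "\<dots> = (\<Sum>v\<in>V. X v * cmul (ptensor (\<lambda>i. lbasis (v i))) Y c)"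
      by (simp add: mulC_sum_left mulC_smult_left)
    finally show "cmul X Y c = (\<Sum>v\<in>V. X v * cmul (ptensor (\<lambda>i. lbasis (v i))) Y c)" .
  qed
  then have "counit R (cmul X Y) = (\<Sum>v\<in>V. X v * counit R (cmul (ptensor (\<lambda>i. lbasis (v i))) Y))"
    by (simp add: counit_sum)
  also have "\<dots> = (\<Sum>v\<in>V. \<Sum>w\<in>V. Y w * (X v *
     (\<Prod>B\<in>blocks R. fmul (fusion.F (\<lambda>i. lbasis (v i)) B) (fusion.F (\<lambda>i. lbasis (w i)) B) one)))"
    by (simp add: counit_mulC_ptensor[OF assms(1)] sum_distrib_left mult_ac)
  also have "\<dots> = (\<Sum>w\<in>V. \<Sum>v\<in>V. Y w * (X v *
     (\<Prod>B\<in>blocks R. fmul (fusion.F (\<lambda>i. lbasis (v i)) B) (fusion.F (\<lambda>i. lbasis (w i)) B) one)))"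
    by (rule sum.swap)
  finally show ?thesis by (simp add: sum_distrib_left)
qed

subsection \<open>Multiplication by \<open>\<Omega>\<close>\<close>

definition Omega_vec :: "nat \<Rightarrow> nat \<Rightarrow> 'l \<Rightarrow> nat \<Rightarrow> 'l" where
  "Omega_vec i j c = (unitvec one)(i := c, j := dual c)"

definition Omega_factor :: "nat \<Rightarrow> nat \<Rightarrow> 'l \<Rightarrow> nat \<Rightarrow> 'l \<Rightarrow> int" where
  "Omega_factor i j c = (\<lambda>k. lbasis (Omega_vec i j c k))"

lemma Omega_vec_in_V: "i < n \<Longrightarrow> j < n \<Longrightarrow> Omega_vec i j c \<in> V"
  by (simp add: Omega_vec_def in_V unitvec_def)

lemma Omega_eq_sum_ptensor:
  assumes "i < n" "j < n"
  shows "Omega one dual i j = (\<lambda>v. \<Sum>c\<in>UNIV. ptensor (Omega_factor i j c) v)"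
  unfolding Omega_def using basis_eq_ptensor[OF Omega_vec_in_V[OF assms]]
  by (simp add: Omega_vec_def Omega_factor_def)

lemma counit_mulC_Omega:
  assumes "layer_partition r" "i < n" "j < n"
  shows "counit r (cmul Y (Omega one dual i j)) =
    (\<Sum>w\<in>V. Y w *
        (\<Sum>c\<in>UNIV. \<Prod>B\<in>blocks r. fmul (fusion.F (Omega_factor i j c) B)
            (fusion.F (\<lambda>k. lbasis (w k)) B) one))"
proof -
  have "cmul Y (Omega one dual i j) = (\<lambda>x. \<Sum>c\<in>UNIV. 1 * cmul (ptensor (Omega_factor i j c)) Y x)"
    by (rule ext) (simp add: mulC_commute[of Y] Omega_eq_sum_ptensor[OF assms(2,3)] mulC_sum_left)
  then have "counit r (cmul Y (Omega one dual i j)) =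
      (\<Sum>c\<in>UNIV. 1 * counit r (cmul (ptensor (Omega_factor i j c)) Y))"
    by (simp only: counit_sum)
  also have "\<dots> =
      (\<Sum>c\<in>UNIV. \<Sum>w\<in>V. Y w *
          (\<Prod>B\<in>blocks r. fmul (fusion.F (Omega_factor i j c) B)
              (fusion.F (\<lambda>k. lbasis (w k)) B) one))"
    by (simp add: counit_mulC_ptensor[OF assms(1)])
  also have "\<dots> =
      (\<Sum>w\<in>V. \<Sum>c\<in>UNIV. Y w *
          (\<Prod>B\<in>blocks r. fmul (fusion.F (Omega_factor i j c) B)
              (fusion.F (\<lambda>k. lbasis (w k)) B) one))"
    by (rule sum.swap)
  also have "\<dots> =
      (\<Sum>w\<in>V. Y w *
          (\<Sum>c\<in>UNIV. \<Prod>B\<in>blocks r. fmul (fusion.F (Omega_factor i j c) B)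
              (fusion.F (\<lambda>k. lbasis (w k)) B) one))"
    by (simp add: sum_distrib_left)
  finally show ?thesis .
qed

lemma Omega_factor_i: "Omega_factor i j c i = (if i = j then lbasis (dual c) else lbasis c)"
  by (simp add: Omega_factor_def Omega_vec_def)

lemma Omega_factor_j: "Omega_factor i j c j = lbasis (dual c)"
  by (simp add: Omega_factor_def Omega_vec_def)

lemma Omega_factor_other: "k \<noteq> i \<Longrightarrow> k \<noteq> j \<Longrightarrow> Omega_factor i j c k = lbasis one"
  by (simp add: Omega_factor_def Omega_vec_def unitvec_def)

lemma fusion_Omega_factor_neutral:
  "i \<notin> B \<Longrightarrow> j \<notin> B \<Longrightarrow> fusion.F (Omega_factor i j c) B = lbasis one"
  by (rule fusion_neutral) (metis Omega_factor_other)

lemma sum_Omega_factor_merge: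
  assumes P: "layer_partition r" and ij: "i < n" "j < n" "(i, j) \<notin> r"
  shows "(\<Sum>c\<in>UNIV. \<Prod>B\<in>blocks r. fmul (fusion.F (Omega_factor i j c) B) (fusion.F h B) one)
    = (\<Prod>B\<in>blocks (join r i j). fusion.F h B one)"
proof -
  let ?Bi = "r `` {i}" and ?Bj = "r `` {j}"
  let ?R = "\<Prod>B\<in>blocks r - {?Bi, ?Bj}. fusion.F h B one"
  have Bi: "?Bi \<in> blocks r" "i \<in> ?Bi" "j \<notin> ?Bi" and Bj: "?Bj \<in> blocks r" "j \<in> ?Bj" "i \<notin> ?Bj"
    using Image_in_blocks[OF P] ij layer_partition_sym[OF P] by auto
  have BiBj: "?Bi \<noteq> ?Bj" using Bi(3) Bj(2) by blast
  have fin: "finite ?Bi" "finite ?Bj" using finite_block[OF P] Bi(1) Bj(1) by auto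
  have "i \<noteq> j" using ij(3) layer_partition_refl[OF P] by auto
  have FBi: "fusion.F (Omega_factor i j c) ?Bi = lbasis c" for c
  proof -
    have "fusion.F (Omega_factor i j c) ?Bi = Omega_factor i j c i"
      by (rule fusion_single[OF fin(1) Bi(2)]) (metis Omega_factor_other Bi(3))
    then show ?thesis using \<open>i \<noteq> j\<close> by (simp add: Omega_factor_i)
  qed
  have FBj: "fusion.F (Omega_factor i j c) ?Bj = lbasis (dual c)" for c
  proof -
    have "fusion.F (Omega_factor i j c) ?Bj = Omega_factor i j c j"
      by (rule fusion_single[OF fin(2) Bj(2)]) (metis Omega_factor_other Bj(3))
    then show ?thesis by (simp add: Omega_factor_j)
  qed
  have other:
      "(\<Prod>B\<in>blocks r - {?Bi, ?Bj}. fmul (fusion.F (Omega_factor i j c) B) (fusion.F h B)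
          one) = ?R" for c
  proof (rule prod.cong[OF refl])
    fix B assume "B \<in> blocks r - {?Bi, ?Bj}"
    then have "i \<notin> B" "j \<notin> B" using block_eq_Image[OF P] by blast+
    then show "fmul (fusion.F (Omega_factor i j c) B) (fusion.F h B) one = fusion.F h B one"
      by (simp add: fusion_Omega_factor_neutral fmul_one_left)
  qed
  have "(\<Sum>c\<in>UNIV. \<Prod>B\<in>blocks r. fmul (fusion.F (Omega_factor i j c) B) (fusion.F h B) one)
      = (\<Sum>c\<in>UNIV. fmul (fusion.F h ?Bi) (lbasis c) one *
          fmul (fusion.F h ?Bj) (lbasis (dual c)) one) * ?R"
    by (simp add: prod_remove2[OF finite_blocks Bi(1) Bj(1) BiBj] FBi FBj other sum_distrib_left
        sum_distrib_right mult_ac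
        fmul_commute[of "lbasis _"])
  also have "\<dots> = fusion.F h (?Bi \<union> ?Bj) one * ?R"
    using fusion.union_disjoint[OF fin blocks_disjoint[OF P Bi(1) Bj(1) BiBj]]
    by (simp only: sum_unit_coeff_fmul_dual)
  also have "\<dots> = (\<Prod>B\<in>blocks (join r i j). fusion.F h B one)"
    by (rule prod_blocks_join[OF P ij, symmetric])
  finally show ?thesis .
qed

definition omega_at :: "nat \<Rightarrow> nat \<Rightarrow> 'l \<Rightarrow> int" where
  "omega_at i = (\<lambda>k. if k = i then omega else lbasis one)"

lemma sum_Omega_factor_same:
  assumes P: "layer_partition r" and ij: "i < n" "j < n" "i \<noteq> j" "(i, j) \<in> r"
  shows "(\<Sum>c\<in>UNIV. \<Prod>B\<in>blocks r. fmul (fusion.F (Omega_factor i j c) B) (fusion.F h B) one)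
    = (\<Prod>B\<in>blocks r. fmul (fusion.F (omega_at i) B) (fusion.F h B) one)"
proof -
  let ?Bi = "r `` {i}"
  let ?R = "\<Prod>B\<in>blocks r - {?Bi}. fmul (fusion.F (omega_at i) B) (fusion.F h B) one"
  have Bi: "?Bi \<in> blocks r" "i \<in> ?Bi" "j \<in> ?Bi" using Image_in_blocks[OF P] ij by auto
  have fin: "finite ?Bi" by (rule finite_block[OF P Bi(1)])
  have other:
      "(\<Prod>B\<in>blocks r - {?Bi}. fmul (fusion.F (Omega_factor i j c) B) (fusion.F h B) one) = ?R" for c
  proof (rule prod.cong[OF refl])
    fix B assume "B \<in> blocks r - {?Bi}"
    then have "i \<notin> B" "j \<notin> B"
      using block_eq_Image[OF P] Bi(3) layer_partition_Image_eq[OF P ij(4)] by blast+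
    moreover have "fusion.F (omega_at i) B = lbasis one"
      by (rule fusion_neutral) (use \<open>i \<notin> B\<close> in \<open>auto simp: omega_at_def\<close>)
    ultimately show "fmul (fusion.F (Omega_factor i j c) B) (fusion.F h B) one
        = fmul (fusion.F (omega_at i) B) (fusion.F h B) one"
      by (simp add: fusion_Omega_factor_neutral)
  qed
  have "fusion.F (Omega_factor i j c) ?Bi = fmul (lbasis c) (lbasis (dual c))" for c
    using fusion_two[OF fin Bi(2,3) ij(3), of "Omega_factor i j c"] ij(3)
    by (auto simp: Omega_factor_other Omega_factor_i Omega_factor_j)
  then have "(\<Sum>c\<in>UNIV. \<Prod>B\<in>blocks r. fmul (fusion.F (Omega_factor i j c) B) (fusion.F h B) one)
      = (\<Sum>c\<in>UNIV. fmul (fmul (lbasis c) (lbasis (dual c))) (fusion.F h ?Bi) one) * ?R"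
    by (simp add: prod.remove[OF finite_blocks Bi(1)] other sum_distrib_right)
  also have "\<dots> = fmul omega (fusion.F h ?Bi) one * ?R"
    unfolding omega_def by (simp only: fmul_sum_left)
  also have "\<dots> = (\<Prod>B\<in>blocks r. fmul (fusion.F (omega_at i) B) (fusion.F h B) one)"
    using fusion_single[OF fin Bi(2), of "omega_at i"]
    by (simp add: prod.remove[OF finite_blocks Bi(1)] omega_at_def)
  finally show ?thesis .
qed

lemma counit_mulC_Omega_merge:
  assumes "layer_partition r" "i < n" "j < n" "(i, j) \<notin> r"
  shows "counit r (cmul Y (Omega one dual i j)) = counit (join r i j) Y"
  by (simp only: counit_mulC_Omega[OF assms(1-3)] sum_Omega_factor_merge[OF assms])
      (simp add: counit_def counit_prod_def)

lemma counit_mulC_Omega_same: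
  assumes "layer_partition r" "i < n" "j < n" "i \<noteq> j" "(i, j) \<in> r"
  shows "counit r (cmul Y (Omega one dual i j)) = counit r (cmul Y (ptensor (omega_at i)))"
  unfolding counit_mulC_Omega[OF assms(1-3)] sum_Omega_factor_same[OF assms]
  by (simp add: mulC_commute[of Y] counit_mulC_ptensor[OF assms(1)])

lemma fusion_at_min:
  assumes "layer_partition r" "B \<in> blocks r"
  shows "fusion.F (\<lambda>k. if k = Min (r `` {k}) then g k else lbasis one) B = g (Min B)"
  using fusion_single[OF finite_block[OF assms] Min_block(1)[OF assms]] block_eq_Image[OF assms]
    Min_block[OF assms] by simp

fun omega_pow :: "nat \<Rightarrow> 'l \<Rightarrow> int" where
  "omega_pow 0 = lbasis one"
| "omega_pow (Suc m) = fmul omega (omega_pow m)"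

lemma omega_pow_add: "fmul (omega_pow a) (omega_pow b) = omega_pow (a + b)"
  by (induction a) (simp_all add: fmul_one_left fmul_assoc)

lemma omega_pow_Suc: "fmul (omega_pow a) omega = omega_pow (Suc a)"
proof -
  have "omega = omega_pow 1" by (simp add: fmul_one_right)
  then show ?thesis using omega_pow_add[of a 1] by simp
qed

definition omega_weight :: "(nat \<times> nat) set \<Rightarrow> (nat \<times> nat) list \<Rightarrow> nat \<Rightarrow> 'l \<Rightarrow> int" where
  "omega_weight r E = (\<lambda>k.
      if k = Min (joins r E `` {k}) then omega_pow (omega_count r E k) else lbasis one)"

lemma omega_weight_Nil: "omega_weight r [] = (\<lambda>k. lbasis one)"
  by (rule ext) (simp add: omega_weight_def)

lemma fusion_omega_weight:
  assumes "layer_partition r" "proper_pairs E" "B \<in> blocks (joins r E)" "x \<in> B"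
  shows "fusion.F (omega_weight r E) B = omega_pow (omega_count r E x)"
proof -
  have P: "layer_partition (joins r E)" by (rule layer_partition_joins[OF assms(1,2)])
  have "fusion.F (omega_weight r E) B = omega_pow (omega_count r E (Min B))"
    unfolding omega_weight_def by (rule fusion_at_min[OF P assms(3)])
  also have "omega_count r E (Min B) = omega_count r E x"
    using Min_block(3)[OF P assms(3)] assms(4) by (intro omega_count_cong[OF assms(1,2)]) auto
  finally show ?thesis .
qed

fun Omega_prod :: "(nat \<times> nat) list \<Rightarrow> (nat \<Rightarrow> 'l) \<Rightarrow> int" where
  "Omega_prod [] = basis (unitvec one)"
| "Omega_prod ((i, j) # E) = cmul (Omega one dual i j) (Omega_prod E)"

lemma supported_Omega_prod: "supported (Omega_prod E)"
  by (cases E rule: Omega_prod.cases) (auto simp: supported_mulC supported_basis unit_in_V)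

lemma fusion_omega_weight_merge:
  assumes r: "layer_partition r" and E: "proper_pairs ((i, j) # E)" and ij: "(i, j) \<notin> joins r E"
    and B: "B \<in> blocks (join (joins r E) i j)"
  shows "fusion.F (omega_weight r E) B = fusion.F (omega_weight r ((i, j) # E)) B"
proof -
  let ?Q = "joins r E"
  have g: "proper_pairs E" "i < n" "j < n" using E by (auto simp: proper_pairs_Cons)
  have P: "layer_partition ?Q" by (rule layer_partition_joins[OF r g(1)])
  have PE: "layer_partition (join ?Q i j)" by (rule layer_partition_join[OF P g(2,3)])
  have m: "Min B \<in> B" by (rule Min_block(1)[OF PE B])
  have new: "fusion.F (omega_weight r ((i, j) # E)) B =
      omega_pow (omega_count r ((i, j) # E) (Min B))"
    using fusion_omega_weight[OF r E _ m] B by simp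
  from B[unfolded blocks_join[OF P g(2,3)]] show ?thesis
  proof (elim insertE)
    assume Bij: "B = ?Q `` {i} \<union> ?Q `` {j}"
    have fin: "finite (?Q `` {i})" "finite (?Q `` {j})"
      using finite_block[OF P] Image_in_blocks[OF P] g(2,3) by auto
    have disj: "?Q `` {i} \<inter> ?Q `` {j} = {}"
      using blocks_disjoint[OF P] Image_in_blocks[OF P] g(2,3) ij by (metis Image_singleton_iff)
    have "fusion.F (omega_weight r E) B
        = fmul (fusion.F (omega_weight r E) (?Q `` {i})) (fusion.F (omega_weight r E) (?Q `` {j}))"
      using Bij fusion.union_disjoint[OF fin disj] by simp
    also have "\<dots> = fmul (omega_pow (omega_count r E i)) (omega_pow (omega_count r E j))"
      using fusion_omega_weight[OF r g(1), of "?Q `` {i}" i]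
          fusion_omega_weight[OF r g(1), of "?Q `` {j}" j]
        Image_in_blocks[OF P] g(2,3) by auto
    also have "\<dots> = omega_pow (omega_count r ((i, j) # E) (Min B))"
    proof -
      have "(Min B, i) \<in> ?Q \<or> (Min B, j) \<in> ?Q" using m Bij layer_partition_sym[OF P] by auto
      then show ?thesis using ij by (simp add: omega_pow_add)
    qed
    finally show ?thesis using new by simp
  next
    assume B2: "B \<in> blocks ?Q - {?Q `` {i}, ?Q `` {j}}"
    then have "B = ?Q `` {Min B}" using block_eq_Image[OF P _ m] by blast
    then have "(Min B, i) \<notin> ?Q" "(Min B, j) \<notin> ?Q"
      using B2 layer_partition_Image_eq[OF P] by auto
    moreover have "fusion.F (omega_weight r E) B = omega_pow (omega_count r E (Min B))"
      using fusion_omega_weight[OF r g(1), of B "Min B"] B2 m by auto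
    ultimately show ?thesis using new by simp
  qed
qed

lemma fusion_omega_weight_close:
  assumes r: "layer_partition r" and E: "proper_pairs ((i, j) # E)" and ij: "(i, j) \<in> joins r E"
    and B: "B \<in> blocks (joins r E)"
  shows "fusion.F (\<lambda>k. fmul (omega_weight r E k) (omega_at i k)) B =
      fusion.F (omega_weight r ((i, j) # E)) B"
proof -
  let ?Q = "joins r E"
  have g: "proper_pairs E" using E by (simp add: proper_pairs_Cons)
  have P: "layer_partition ?Q" by (rule layer_partition_joins[OF r g])
  have m: "Min B \<in> B" by (rule Min_block(1)[OF P B])
  have fin: "finite B" by (rule finite_block[OF P B])
  have new: "fusion.F (omega_weight r ((i, j) # E)) B =
      omega_pow (omega_count r ((i, j) # E) (Min B))"
    using fusion_omega_weight[OF r E _ m] B join_absorb[OF P ij] by simp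
  have old: "fusion.F (omega_weight r E) B = omega_pow (omega_count r E (Min B))"
    by (rule fusion_omega_weight[OF r g B m])
  have dist: "fusion.F (\<lambda>k. fmul (omega_weight r E k) (omega_at i k)) B
      = fmul (fusion.F (omega_weight r E) B) (fusion.F (omega_at i) B)"
    by (rule fusion.distrib)
  show ?thesis
  proof (cases "i \<in> B")
    case True
    have "fusion.F (omega_at i) B = omega"
      using fusion_single[OF fin True, of "omega_at i"] by (simp add: omega_at_def)
    moreover have "(Min B, i) \<in> ?Q" using True m block_eq_Image[OF P B]
      by (metis Image_singleton_iff)
    moreover have "omega_count r E i = omega_count r E (Min B)"
      using omega_count_cong[OF r g calculation(2)] by simp
    ultimately show ?thesis using dist old new ij by (simp add: omega_pow_Suc)
  next
    case False
    have "fusion.F (omega_at i) B = lbasis one"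
      by (rule fusion_neutral) (use False in \<open>auto simp: omega_at_def\<close>)
    moreover have "(Min B, i) \<notin> ?Q" "(Min B, j) \<notin> ?Q"
      using False m block_eq_Image[OF P B]
          layer_partition_trans[OF P _ layer_partition_sym[OF P ij]] by auto
    ultimately show ?thesis using dist old new by (simp add: fmul_one_right)
  qed
qed

lemma counit_mulC_Omega_prod:
  assumes "layer_partition r" "proper_pairs E"
  shows "counit r (cmul Y (Omega_prod E)) =
      counit (joins r E) (cmul Y (ptensor (omega_weight r E)))"
  using assms(2)
proof (induction E arbitrary: Y)
  case Nil
  have "ptensor (omega_weight r []) = basis (unitvec one)"
    using basis_eq_ptensor[OF unit_in_V] by (simp add: omega_weight_Nil unitvec_def)
  then show ?case by simp
next
  case (Cons e E)
  obtain i j where e: "e = (i, j)" by (cases e)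
  have g: "proper_pairs E" "i < n" "j < n" "i \<noteq> j" using Cons.prems e
    by (auto simp: proper_pairs_Cons)
  let ?Q = "joins r E" and ?H = "ptensor (omega_weight r E)" and ?\<Omega> = "Omega one dual i j"
  have P: "layer_partition ?Q" by (rule layer_partition_joins[OF assms(1) g(1)])
  have "counit r (cmul Y (Omega_prod (e # E))) = counit r (cmul (cmul Y ?\<Omega>) (Omega_prod E))"
    using e by (simp add: mulC_assoc)
  also have "\<dots> = counit ?Q (cmul (cmul Y ?\<Omega>) ?H)"
    by (rule Cons.IH[OF g(1)])
  also have "\<dots> = counit ?Q (cmul (cmul Y ?H) ?\<Omega>)"
    by (simp add: mulC_assoc mulC_commute[of ?\<Omega>])
  also have "\<dots> = counit (joins r (e # E)) (cmul Y (ptensor (omega_weight r (e # E))))"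
  proof (cases "(i, j) \<in> ?Q")
    case False
    have "counit ?Q (cmul (cmul Y ?H) ?\<Omega>) = counit (join ?Q i j) (cmul Y ?H)"
      by (rule counit_mulC_Omega_merge[OF P g(2,3) False])
    also have "\<dots> = counit (join ?Q i j) (cmul Y (ptensor (omega_weight r ((i, j) # E))))"
      by (rule counit_mulC_ptensor_cong[OF layer_partition_join[OF P g(2,3)]])
        (rule fusion_omega_weight_merge[OF assms(1) Cons.prems[unfolded e] False])
    finally show ?thesis using e by simp
  next
    case True
    have "counit ?Q (cmul (cmul Y ?H) ?\<Omega>) = counit ?Q (cmul (cmul Y ?H) (ptensor (omega_at i)))"
      by (rule counit_mulC_Omega_same[OF P g(2-4) True])
    also have "\<dots> = counit ?Q (cmul Y (ptensor (\<lambda>k. fmul (omega_weight r E k) (omega_at i k))))"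
      by (simp add: mulC_assoc mulC_ptensor_ptensor)
    also have "\<dots> = counit ?Q (cmul Y (ptensor (omega_weight r ((i, j) # E))))"
      by (rule counit_mulC_ptensor_cong[OF P])
        (rule fusion_omega_weight_close[OF assms(1) Cons.prems[unfolded e] True])
    finally show ?thesis using e join_absorb[OF P True] by simp
  qed
  finally show ?case .
qed

lemma Fcalc_eq_Omega_prod: "Fcalc one dual N n ts s = Omega_prod (twist_pairs ts s)"
proof (induction ts)
  case Nil then show ?case by simp
next
  case (Cons e ts)
  obtain i j where e: "e = (i, j)" by (cases e)
  show ?case
  proof (cases "same_cycle (tprod ts \<circ> s) i j")
    case True then show ?thesis using Cons e by simp
  next
    case False then show ?thesis using Cons e by (simp add: mulC_unit_left supported_Omega_prod)
  qed
qed

subsection \<open>Confinement and deconfinement\<close>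

definition dual_at_min :: "(nat \<times> nat) set \<Rightarrow> (nat \<Rightarrow> 'l) \<Rightarrow> nat \<Rightarrow> 'l \<Rightarrow> int" where
  "dual_at_min r c = (\<lambda>k. if k = Min (r `` {k}) then lbasis (dual (c k)) else lbasis one)"

definition label_at_min :: "(nat \<times> nat) set \<Rightarrow> (nat \<Rightarrow> 'l) \<Rightarrow> nat \<Rightarrow> 'l \<Rightarrow> int" where
  "label_at_min r a = (\<lambda>k. if k = Min (r `` {k}) then lbasis (a k) else lbasis one)"

lemma conf_eq_counit:
  assumes "p permutes {..<n}" "c \<in> fixvecs one n p"
  shows "conf one N n p x c = counit (cycle_rel p) (cmul x (ptensor (dual_at_min (cycle_rel p) c)))"
proof -
  have P: "layer_partition (cycle_rel p)" by (rule layer_partition_cycle_rel[OF assms(1)])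
  have "counit (cycle_rel p) (cmul x (ptensor (dual_at_min (cycle_rel p) c))) =
     (\<Sum>w\<in>V. x w *
         (\<Prod>B\<in>blocks (cycle_rel p). fmul (fusion.F (dual_at_min (cycle_rel p) c) B)
             (fusion.F (\<lambda>i. lbasis (w i)) B) one))"
    by (simp add: mulC_commute[of x] counit_mulC_ptensor[OF P])
  also have "\<dots> =
      (\<Sum>w\<in>V. x w *
          (\<Prod>B\<in>blocks (cycle_rel p). fusl one N (map w (sorted_list_of_set B)) (c (Min B))))"
  proof (intro sum.cong refl arg_cong[where f="\<lambda>t. _ * t"] prod.cong)
    fix w B assume B: "B \<in> blocks (cycle_rel p)"
    have "fusion.F (dual_at_min (cycle_rel p) c) B = lbasis (dual (c (Min B)))"
      unfolding dual_at_min_def by (rule fusion_at_min[OF P B])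
    then have "fmul (fusion.F (dual_at_min (cycle_rel p) c) B) (fusion.F (\<lambda>i. lbasis (w i)) B) one =
        fusion.F (\<lambda>i. lbasis (w i)) B (c (Min B))"
      by (simp add: fmul_commute[of "lbasis _"] unit_coeff_fmul_lbasis)
    then show "fmul (fusion.F (dual_at_min (cycle_rel p) c) B) (fusion.F (\<lambda>i. lbasis (w i)) B) one =
        fusl one N (map w (sorted_list_of_set B)) (c (Min B))"
      using fusl_sorted_eq_fusion[OF finite_block[OF P B]] by simp
  qed
  also have "\<dots> = conf one N n p x c"
    unfolding conf_def using assms(2) by (simp add: orbits_eq_blocks)
  finally show ?thesis by simp
qed

lemma fusion_block_Union:
  assumes "layer_partition r" "layer_partition R" "r \<subseteq> R" "B \<in> blocks R"
  shows "fusion.F g B = fusion.F (\<lambda>Ob. fusion.F g Ob) {Ob \<in> blocks r. Ob \<subseteq> B}"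
proof -
  have "fusion.F g (\<Union>{Ob \<in> blocks r. Ob \<subseteq> B}) =
      fusion.F (\<lambda>Ob. fusion.F g Ob) {Ob \<in> blocks r. Ob \<subseteq> B}"
    using fusion.Union_disjoint[of "{Ob \<in> blocks r. Ob \<subseteq> B}" g] finite_block[OF assms(1)]
      blocks_disjoint[OF assms(1)] by (auto simp: o_def)
  then show ?thesis using Union_blocks_refine[OF assms] by simp
qed

definition orbit_vec :: "(nat \<Rightarrow> nat) \<Rightarrow> (nat set \<Rightarrow> 'l) \<Rightarrow> nat \<Rightarrow> 'l" where
  "orbit_vec p c = (\<lambda>k. if k < n then c (cycle_rel p `` {k}) else one)"

lemma orbit_vec_fixvecs:
  assumes "p permutes {..<n}"
  shows "orbit_vec p c \<in> fixvecs one n p"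
proof -
  have "orbit_vec p c (p i) = orbit_vec p c i" if "i < n" for i
  proof -
    have "p i < n" using permutes_in_image[OF assms] that by auto
    moreover have "cycle_rel p `` {p i} = cycle_rel p `` {i}"
      using layer_partition_Image_eq[OF layer_partition_cycle_rel[OF assms] cycle_rel_step[of i p]]
      by simp
    ultimately show ?thesis using that by (simp add: orbit_vec_def)
  qed
  then show ?thesis by (simp add: fixvecs_def in_V orbit_vec_def)
qed

lemma orbit_vec_eq_iff:
  assumes "p permutes {..<n}" "a \<in> fixvecs one n p" "c \<in> PiE (blocks (cycle_rel p)) (\<lambda>_. UNIV)"
  shows "orbit_vec p c = a \<longleftrightarrow> c = (\<lambda>Ob\<in>blocks (cycle_rel p). a (Min Ob))"
proof
  have P: "layer_partition (cycle_rel p)" by (rule layer_partition_cycle_rel[OF assms(1)])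
  {
    assume ca: "orbit_vec p c = a"
    show "c = (\<lambda>Ob\<in>blocks (cycle_rel p). a (Min Ob))"
    proof
      fix Ob show "c Ob = (\<lambda>Ob\<in>blocks (cycle_rel p). a (Min Ob)) Ob"
        using ca Min_block[OF P, of Ob] assms(3)
        by (auto simp: orbit_vec_def PiE_def extensional_def)
    qed
  next
    assume c: "c = (\<lambda>Ob\<in>blocks (cycle_rel p). a (Min Ob))"
    show "orbit_vec p c = a"
    proof
      fix k show "orbit_vec p c k = a k"
      proof (cases "k < n")
        case True
        have B: "cycle_rel p `` {k} \<in> blocks (cycle_rel p)" "k \<in> cycle_rel p `` {k}"
          using Image_in_blocks[OF P True] by auto
        have "(k, Min (cycle_rel p `` {k})) \<in> cycle_rel p" using Min_block(1)[OF P B(1)] by auto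
        then have "a (Min (cycle_rel p `` {k})) = a k"
          by (rule fixvecs_cycle_rel[OF assms(1,2) _ True])
        then show ?thesis using True B c by (simp add: orbit_vec_def)
      next
        case False
        then show ?thesis using assms(2) by (simp add: orbit_vec_def fixvecs_def in_V)
      qed
    qed
  }
qed

lemma deconf_orbit_coeff:
  assumes "p permutes {..<n}" "conf one N n p d = basis a" "a \<in> fixvecs one n p"
    "c \<in> PiE (blocks (cycle_rel p)) (\<lambda>_. UNIV)"
  shows "(\<Sum>v\<in>V. d v * (\<Prod>Ob\<in>blocks (cycle_rel p). fusion.F (\<lambda>i. lbasis (v i)) Ob (c Ob)))
    = (if c = (\<lambda>Ob\<in>blocks (cycle_rel p). a (Min Ob)) then 1 else 0)"
proof -
  have P: "layer_partition (cycle_rel p)" by (rule layer_partition_cycle_rel[OF assms(1)])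
  have "(\<Sum>v\<in>V. d v * (\<Prod>Ob\<in>blocks (cycle_rel p). fusion.F (\<lambda>i. lbasis (v i)) Ob (c Ob)))
      = conf one N n p d (orbit_vec p c)"
    unfolding conf_def using orbit_vec_fixvecs[OF assms(1), of c] Min_block[OF P]
    by (auto simp: orbits_eq_blocks fusl_sorted_eq_fusion[OF finite_block[OF P]] orbit_vec_def
        intro!: sum.cong prod.cong)
  then show ?thesis
    using assms(2) orbit_vec_eq_iff[OF assms(1,3,4)] by (simp add: basis_def)
qed

lemma prod_unit_coeff_orbits_expand:
  assumes "p permutes {..<n}" "layer_partition R" "cycle_rel p \<subseteq> R"
  defines "J \<equiv> \<lambda>B. {Ob \<in> blocks (cycle_rel p). Ob \<subseteq> B}"
  shows "(\<Prod>B\<in>blocks R. fmul (fusion.F X (J B)) (Y B) one)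
    = (\<Sum>c\<in>PiE (blocks (cycle_rel p)) (\<lambda>_. UNIV). (\<Prod>Ob\<in>blocks (cycle_rel p). X Ob (c Ob)) *
        (\<Prod>B\<in>blocks R. fmul (fusion.F (\<lambda>Ob. lbasis (c Ob)) (J B)) (Y B) one))"
proof -
  let ?I = "blocks (cycle_rel p)"
  have P: "layer_partition (cycle_rel p)" by (rule layer_partition_cycle_rel[OF assms(1)])
  define G where "G = (\<lambda>X. \<Prod>B\<in>blocks R. fmul (fusion.F X (J B)) (Y B) one)"
  have Gcong: "G X = G X'" if "\<And>Ob. Ob \<in> ?I \<Longrightarrow> X Ob = X' Ob" for X X'
    unfolding G_def J_def
    by (intro prod.cong refl arg_cong[where f="\<lambda>t. fmul t _ one"] fusion.cong) (auto simp: that)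
  have Glin: "G X = (\<Sum>x\<in>UNIV. X Ob x * G (X(Ob := lbasis x)))" if Ob: "Ob \<in> ?I" for Ob X
    unfolding G_def
  proof (rule prod_fusion_expand)
    let ?B0 = "R `` {Min Ob}"
    have mn: "Min Ob \<in> Ob" "Min Ob < n" using Min_block[OF P Ob] by auto
    show "finite (blocks R)" by (rule finite_blocks)
    show "?B0 \<in> blocks R" using Image_in_blocks[OF assms(2) mn(2)] by auto
    show "Ob \<in> J ?B0" using Ob Min_block(3)[OF P Ob] assms(3) by (auto simp: J_def)
    show "finite (J ?B0)" by (simp add: J_def finite_blocks)
    fix B assume B: "B \<in> blocks R" "B \<noteq> ?B0"
    show "Ob \<notin> J B"
    proof
      assume "Ob \<in> J B"
      then have "Min Ob \<in> B" using mn(1) by (auto simp: J_def)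
      then show False using block_eq_Image[OF assms(2) B(1)] B(2) by blast
    qed
  qed
  have "G X = (\<Sum>c\<in>PiE ?I (\<lambda>_. UNIV). (\<Prod>Ob\<in>?I. X Ob (c Ob)) * G (\<lambda>Ob.
      if Ob \<in> ?I then lbasis (c Ob) else X Ob))"
    by (rule sum_PiE_expand[OF finite_blocks Glin])
  also have "\<dots> = (\<Sum>c\<in>PiE ?I (\<lambda>_. UNIV). (\<Prod>Ob\<in>?I. X Ob (c Ob)) * G (\<lambda>Ob. lbasis (c Ob)))"
    by (intro sum.cong refl arg_cong[where f="\<lambda>t. _ * t"] Gcong) simp
  finally show ?thesis unfolding G_def .
qed

lemma sum_deconf_prod_unit_coeff:
  assumes "p permutes {..<n}" "layer_partition R" "cycle_rel p \<subseteq> R"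
    "conf one N n p d = basis a" "a \<in> fixvecs one n p"
  shows "(\<Sum>v\<in>V. d v * (\<Prod>B\<in>blocks R. fmul (fusion.F (\<lambda>i. lbasis (v i)) B) (Y B) one))
    = (\<Prod>B\<in>blocks R. fmul (fusion.F (label_at_min (cycle_rel p) a) B) (Y B) one)"
proof -
  let ?I = "blocks (cycle_rel p)"
  let ?J = "\<lambda>B. {Ob \<in> ?I. Ob \<subseteq> B}"
  define ca where "ca = (\<lambda>Ob\<in>?I. a (Min Ob))"
  have P: "layer_partition (cycle_rel p)" by (rule layer_partition_cycle_rel[OF assms(1)])
  have label: "fusion.F (label_at_min (cycle_rel p) a) B = fusion.F (\<lambda>Ob. lbasis (ca Ob)) (?J B)"
    if "B \<in> blocks R" for B
    unfolding fusion_block_Union[OF P assms(2,3) that] label_at_min_def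
    by (rule fusion.cong) (auto simp: fusion_at_min[OF P] ca_def)
  let ?P = "\<lambda>v c. \<Prod>Ob\<in>?I. fusion.F (\<lambda>i. lbasis (v i)) Ob (c Ob)"
  let ?G = "\<lambda>c. \<Prod>B\<in>blocks R. fmul (fusion.F (\<lambda>Ob. lbasis (c Ob)) (?J B)) (Y B) one"
  have "(\<Prod>B\<in>blocks R. fmul (fusion.F (\<lambda>i. lbasis (v i)) B) (Y B) one)
      = (\<Sum>c\<in>PiE ?I (\<lambda>_. UNIV). ?P v c * ?G c)" for v
  proof -
    have "(\<Prod>B\<in>blocks R. fmul (fusion.F (\<lambda>i. lbasis (v i)) B) (Y B) one)
        = (\<Prod>B\<in>blocks R. fmul (fusion.F (\<lambda>Ob. fusion.F (\<lambda>i. lbasis (v i)) Ob) (?J B)) (Y B) one)"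
      by (intro prod.cong refl) (simp only: fusion_block_Union[OF P assms(2,3)])
    also have "\<dots> = (\<Sum>c\<in>PiE ?I (\<lambda>_. UNIV). ?P v c * ?G c)"
      by (rule prod_unit_coeff_orbits_expand[OF assms(1-3)])
    finally show ?thesis .
  qed
  then have "(\<Sum>v\<in>V. d v * (\<Prod>B\<in>blocks R. fmul (fusion.F (\<lambda>i. lbasis (v i)) B) (Y B) one))
      = (\<Sum>v\<in>V. \<Sum>c\<in>PiE ?I (\<lambda>_. UNIV). d v * ?P v c * ?G c)"
    by (simp add: sum_distrib_left mult.assoc)
  also have "\<dots> = (\<Sum>c\<in>PiE ?I (\<lambda>_. UNIV). (\<Sum>v\<in>V. d v * ?P v c) * ?G c)"
    by (subst sum.swap) (simp add: sum_distrib_right)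
  also have "\<dots> = (\<Sum>c\<in>PiE ?I (\<lambda>_. UNIV). if c = ca then ?G c else 0)"
    by (rule sum.cong[OF refl], subst deconf_orbit_coeff[OF assms(1,4,5), folded ca_def]) simp_all
  also have "\<dots> = ?G ca"
    by (simp add: sum.delta finite_PiE finite_blocks ca_def)
  also have "\<dots> = (\<Prod>B\<in>blocks R. fmul (fusion.F (label_at_min (cycle_rel p) a) B) (Y B) one)"
    by (intro prod.cong refl) (simp only: label)
  finally show ?thesis .
qed

lemma counit_mulC_deconf:
  assumes "p permutes {..<n}" "layer_partition R" "cycle_rel p \<subseteq> R" "supported d"
    "conf one N n p d = basis a" "a \<in> fixvecs one n p"
  shows "counit R (cmul d Z) = counit R (cmul (ptensor (label_at_min (cycle_rel p) a)) Z)"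
  by (simp add: counit_mulC_expand[OF assms(2,4)] counit_mulC_ptensor[OF assms(2)]
      sum_deconf_prod_unit_coeff[OF assms(1-3,5,6)])

lemma prod_orbits_N_one:
  assumes p: "p permutes {..<n}" and a: "a \<in> fixvecs one n p" and c: "c \<in> fixvecs one n p"
  shows "(\<Prod>Ob\<in>orbits n p. int (N (a (Min Ob)) one (c (Min Ob)))) = (if a = c then 1 else 0)"
proof (cases "a = c")
  case True
  then show ?thesis by (simp add: N_commute[of _ one] N_one_left)
next
  case False
  have P: "layer_partition (cycle_rel p)" by (rule layer_partition_cycle_rel[OF p])
  obtain k where k: "a k \<noteq> c k" using False by auto
  have kn: "k < n" using k a c by (auto simp: fixvecs_def in_V) (metis not_less)
  let ?Ob = "cycle_rel p `` {k}"
  have Ob: "?Ob \<in> orbits n p" "k \<in> ?Ob" using Image_in_blocks[OF P kn]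
    by (auto simp: orbits_eq_blocks)
  have "(k, Min ?Ob) \<in> cycle_rel p" using Min_block(1)[OF P, of ?Ob] Ob
    by (simp add: orbits_eq_blocks)
  then have "a (Min ?Ob) = a k" "c (Min ?Ob) = c k"
    using fixvecs_cycle_rel[OF p a _ kn] fixvecs_cycle_rel[OF p c _ kn] by blast+
  then have "int (N (a (Min ?Ob)) one (c (Min ?Ob))) = 0"
    using k by (simp add: N_commute[of _ one] N_one_left)
  then have "(\<Prod>Ob\<in>orbits n p. int (N (a (Min Ob)) one (c (Min Ob)))) = 0"
    using Ob(1) by (intro prod_zero) (auto simp: orbits_def)
  then show ?thesis using False by simp
qed

lemma mulR_unit_right:
  assumes p: "p permutes {..<n}" and r: "\<And>c. c \<notin> fixvecs one n p \<Longrightarrow> r c = 0"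
  shows "mulR one N n p r (basis (unitvec one)) = r"
proof
  fix c
  show "mulR one N n p r (basis (unitvec one)) c = r c"
  proof (cases "c \<in> fixvecs one n p")
    case False
    then show ?thesis using r by (simp add: mulR_def)
  next
    case True
    have u: "unitvec one \<in> fixvecs one n p"
      by (simp add: fixvecs_def unit_in_V, simp add: unitvec_def)
    have "mulR one N n p r (basis (unitvec one)) c
        = (\<Sum>a\<in>fixvecs one n p. r a * (\<Prod>Ob\<in>orbits n p. int (N (a (Min Ob)) one (c (Min Ob)))))"
      using True u finite_fixvecs
      by (simp add: mulR_def basis_def if_distrib[of "\<lambda>t. _ * t * _"] sum.delta' cong: if_cong)
        (simp add: unitvec_def)
    also have "\<dots> = r c"
      using True by (simp add: prod_orbits_N_one[OF p _ True] if_distrib[of "\<lambda>t. _ * t"] sum.delta'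
          finite_fixvecs cong: if_cong)
    finally show ?thesis .
  qed
qed

lemma conf_zero: "c \<notin> fixvecs one n p \<Longrightarrow> conf one N n p x c = 0" by (simp add: conf_def)

lemma ad_fuse_unit:
  "p permutes {..<n} \<Longrightarrow> ad_fuse one N n p x (basis (unitvec one)) = conf one N n p x"
  unfolding ad_fuse_def by (rule mulR_unit_right) (auto simp: conf_zero)

lemma is_deconfD:
  assumes "p permutes {..<n}" "is_deconf one N n p b d"
  shows "conf one N n p d = basis b" "supported d"
  using assms ad_fuse_unit[OF assms(1)] by (auto simp: is_deconf_def supported_def)

subsection \<open>The crossed relation\<close>

lemma act_vec_Min_image:
  assumes "r permutes {..<n}" "s permutes {..<n}" "b \<in> fixvecs one n s" "Ob \<in> blocks (cycle_rel s)"
  shows "act_vec r b (Min (r ` Ob)) = b (Min Ob)"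
proof -
  have P: "layer_partition (cycle_rel s)" by (rule layer_partition_cycle_rel[OF assms(2)])
  have "Min (r ` Ob) \<in> r ` Ob"
    using finite_block[OF P assms(4)] block_nonempty[OF P assms(4)] by (intro Min_in) auto
  then obtain y where y: "y \<in> Ob" "Min (r ` Ob) = r y" by auto
  have "(Min Ob, y) \<in> cycle_rel s" using Min_block[OF P assms(4)] y(1) by auto
  then have "b y = b (Min Ob)"
    by (rule fixvecs_cycle_rel[OF assms(2,3) _ Min_block(2)[OF P assms(4)]])
  then show ?thesis using y(2) by (simp add: act_vec_def permutes_inverses(2)[OF assms(1)])
qed

lemma fusion_label_at_min_conj:
  assumes "r permutes {..<n}" "s permutes {..<n}" "b \<in> fixvecs one n s"
    and R: "layer_partition R" "cycle_rel s \<subseteq> R" "cycle_rel r \<subseteq> R" "cycle_rel (r \<circ> s \<circ> inv r) \<subseteq> R"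
    and B: "B \<in> blocks R"
  shows "fusion.F (label_at_min (cycle_rel (r \<circ> s \<circ> inv r)) (act_vec r b)) B
    = fusion.F (label_at_min (cycle_rel s) b) B"
proof -
  let ?c = "r \<circ> s \<circ> inv r"
  let ?J = "{Ob \<in> blocks (cycle_rel s). Ob \<subseteq> B}"
  have Ps: "layer_partition (cycle_rel s)" by (rule layer_partition_cycle_rel[OF assms(2)])
  have Pc: "layer_partition (cycle_rel ?c)"
    by (rule layer_partition_cycle_rel[OF conj_permutes(1)[OF assms(1,2)]])
  have rB: "r x \<in> B \<longleftrightarrow> x \<in> B" for x
    by (rule block_cycle_rel_closed[OF R(1,3) B])
  have "fusion.F (label_at_min (cycle_rel ?c) (act_vec r b)) B
      = fusion.F (\<lambda>Ob. lbasis (act_vec r b (Min Ob))) {Ob \<in> blocks (cycle_rel ?c). Ob \<subseteq> B}"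
    unfolding fusion_block_Union[OF Pc R(1,4) B] label_at_min_def
    by (rule fusion.cong) (auto simp: fusion_at_min[OF Pc])
  also have "{Ob \<in> blocks (cycle_rel ?c). Ob \<subseteq> B} = (\<lambda>Ob. r ` Ob) ` ?J"
    unfolding blocks_conj[OF assms(1,2)] using rB by auto
  also have "fusion.F (\<lambda>Ob. lbasis (act_vec r b (Min Ob))) ((\<lambda>Ob. r ` Ob) ` ?J)
      = fusion.F (\<lambda>Ob. lbasis (act_vec r b (Min (r ` Ob)))) ?J"
    using permutes_inj[OF assms(1)]
    by (subst fusion.reindex) (auto simp: inj_on_def inj_image_eq_iff o_def)
  also have "\<dots> = fusion.F (\<lambda>Ob. lbasis (b (Min Ob))) ?J"
    by (rule fusion.cong) (auto simp: act_vec_Min_image[OF assms(1-3)])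
  also have "\<dots> = fusion.F (label_at_min (cycle_rel s) b) B"
    unfolding fusion_block_Union[OF Ps R(1,2) B] label_at_min_def
    by (rule fusion.cong) (auto simp: fusion_at_min[OF Ps])
  finally show ?thesis .
qed

lemma counit_label_at_min_conj:
  assumes "r permutes {..<n}" "s permutes {..<n}" "b \<in> fixvecs one n s"
    and R: "layer_partition R" "cycle_rel s \<subseteq> R" "cycle_rel r \<subseteq> R" "cycle_rel (r \<circ> s \<circ> inv r) \<subseteq> R"
  shows "counit R (cmul (ptensor (label_at_min (cycle_rel (r \<circ> s \<circ> inv r)) (act_vec r b))) Z)
    = counit R (cmul (ptensor (label_at_min (cycle_rel s) b)) Z)"
  by (simp add: counit_mulC_ptensor[OF R(1)] fusion_label_at_min_conj[OF assms])

lemma conf_defect_product: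
  assumes "r permutes {..<n}" "q permutes {..<n}" "a \<in> fixvecs one n r" "b \<in> fixvecs one n q"
    "is_deconf one N n r a d" "is_deconf one N n q b d'" "cycle_decomp n r cs"
    "z \<in> fixvecs one n (r \<circ> q)"
  shows "conf one N n (r \<circ> q) (cmul (cmul d d') (Ftw one dual N n cs q)) z
    = counit ((cycle_rel q \<union> cycle_rel r)\<^sup>*)
        (cmul (ptensor (label_at_min (cycle_rel r) a))
          (cmul (ptensor (label_at_min (cycle_rel q) b))
            (cmul (ptensor (dual_at_min (cycle_rel (r \<circ> q)) z))
              (ptensor (omega_weight (cycle_rel (r \<circ> q)) (twist_pairs (transp_list cs) q))))))"
proof -
  let ?p = "r \<circ> q" and ?E = "twist_pairs (transp_list cs) q"
  let ?R = "(cycle_rel q \<union> cycle_rel r)\<^sup>*"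
  let ?A = "ptensor (label_at_min (cycle_rel r) a)"
      and ?B = "ptensor (label_at_min (cycle_rel q) b)"
  let ?Z =
      "cmul (ptensor (dual_at_min (cycle_rel ?p) z)) (ptensor (omega_weight (cycle_rel ?p) ?E))"
  have pp: "?p permutes {..<n}" by (rule permutes_compose[OF assms(2,1)])
  have P: "layer_partition (cycle_rel ?p)" by (rule layer_partition_cycle_rel[OF pp])
  have E: "proper_pairs ?E"
    by (rule proper_pairs_subset[OF proper_pairs_transp_list[OF assms(1,7)] set_twist_pairs_subset])
  have J: "joins (cycle_rel ?p) ?E = ?R" by (rule joins_twist_pairs[OF assms(1,2,7)])
  have PR: "layer_partition ?R" using layer_partition_joins[OF P E] J by simp
  have D: "conf one N n r d = basis a" "supported d" "conf one N n q d' = basis b" "supported d'"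
    using is_deconfD[OF assms(1,5)] is_deconfD[OF assms(2,6)] by auto
  have "conf one N n ?p (cmul (cmul d d') (Ftw one dual N n cs q)) z
      = counit (cycle_rel ?p)
          (cmul (cmul (cmul d d') (ptensor (dual_at_min (cycle_rel ?p) z))) (Omega_prod ?E))"
    by (simp add: conf_eq_counit[OF pp assms(8)] Ftw_def Fcalc_eq_Omega_prod mulC_assoc
        mulC_commute[of "Omega_prod _"])
  also have "\<dots> = counit ?R (cmul (cmul (cmul d d') (ptensor (dual_at_min (cycle_rel ?p) z)))
      (ptensor (omega_weight (cycle_rel ?p) ?E)))"
    unfolding J[symmetric] by (rule counit_mulC_Omega_prod[OF P E])
  also have "\<dots> = counit ?R (cmul d (cmul d' ?Z))" by (simp add: mulC_assoc)
  also have "\<dots> = counit ?R (cmul ?A (cmul d' ?Z))"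
    by (rule counit_mulC_deconf[OF assms(1) PR _ D(2,1) assms(3)]) auto
  also have "\<dots> = counit ?R (cmul d' (cmul ?A ?Z))"
    by (rule arg_cong[where f="counit ?R"], rule mulC_left_commute)
  also have "\<dots> = counit ?R (cmul ?B (cmul ?A ?Z))"
    by (rule counit_mulC_deconf[OF assms(2) PR _ D(4,3) assms(4)]) auto
  finally show ?thesis by (simp only: mulC_left_commute[of ?B ?A])
qed

lemma omega_weight_twist_pairs_conj:
  assumes "r permutes {..<n}" "s permutes {..<n}"
    "cycle_decomp n r cs1" "cycle_decomp n (r \<circ> s \<circ> inv r) cs2"
  shows "ptensor (omega_weight (cycle_rel (r \<circ> s)) (twist_pairs (transp_list cs1) s))
    = ptensor (omega_weight (cycle_rel (r \<circ> s)) (twist_pairs (transp_list cs2) r))"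
proof -
  let ?c = "r \<circ> s \<circ> inv r"
  note c = conj_permutes[OF assms(1,2)]
  have "joins (cycle_rel (r \<circ> s)) (twist_pairs (transp_list cs2) r) = (cycle_rel s \<union> cycle_rel r)\<^sup>*"
    using joins_twist_pairs[OF c(1) assms(1,4)] rtrancl_cycle_rel_conj[OF assms(1)] c(2) by simp
  then show ?thesis
    using joins_twist_pairs[OF assms(1,2,3)]
        omega_count_twist_pairs_conj[OF assms(1,2) _ assms(3,4)]
    unfolding ptensor_def omega_weight_def by (auto intro!: ext prod.cong)
qed

lemma conf_defect_product_crossed:
  assumes "\<rho> permutes {..<n}" "\<sigma> permutes {..<n}"
    "a \<in> fixvecs one n \<rho>" "b \<in> fixvecs one n \<sigma>"
    "is_deconf one N n \<rho> a d1" "is_deconf one N n \<sigma> b d2"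
    "is_deconf one N n (\<rho> \<circ> \<sigma> \<circ> inv \<rho>) (act_vec \<rho> b) d3" "is_deconf one N n \<rho> a d4"
    "cycle_decomp n \<rho> cs1" "cycle_decomp n (\<rho> \<circ> \<sigma> \<circ> inv \<rho>) cs2"
    "z \<in> fixvecs one n (\<rho> \<circ> \<sigma>)"
  shows "conf one N n (\<rho> \<circ> \<sigma>) (cmul (cmul d1 d2) (Ftw one dual N n cs1 \<sigma>)) z
    = conf one N n (\<rho> \<circ> \<sigma>) (cmul (cmul d3 d4) (Ftw one dual N n cs2 \<rho>)) z"
proof -
  let ?c = "\<rho> \<circ> \<sigma> \<circ> inv \<rho>"
  let ?R = "(cycle_rel \<sigma> \<union> cycle_rel \<rho>)\<^sup>*"
  let ?A = "ptensor (label_at_min (cycle_rel \<rho>) a)"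
  let ?B = "ptensor (label_at_min (cycle_rel \<sigma>) b)"
  let ?B' = "ptensor (label_at_min (cycle_rel ?c) (act_vec \<rho> b))"
  let ?Z = "cmul (ptensor (dual_at_min (cycle_rel (\<rho> \<circ> \<sigma>)) z))
    (ptensor (omega_weight (cycle_rel (\<rho> \<circ> \<sigma>)) (twist_pairs (transp_list cs2) \<rho>)))"
  note c = conj_permutes[OF assms(1,2)]
  have R: "(cycle_rel \<rho> \<union> cycle_rel ?c)\<^sup>* = ?R" by (rule rtrancl_cycle_rel_conj[OF assms(1)])
  have PR: "layer_partition ?R"
    by (rule layer_partition_cycle_rels[OF assms(1,2)])
  have sub: "cycle_rel \<sigma> \<subseteq> ?R" "cycle_rel \<rho> \<subseteq> ?R" "cycle_rel ?c \<subseteq> ?R"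
    using R by auto
  have "conf one N n (\<rho> \<circ> \<sigma>) (cmul (cmul d1 d2) (Ftw one dual N n cs1 \<sigma>)) z =
      counit ?R (cmul ?A (cmul ?B ?Z))"
    using conf_defect_product[OF assms(1-6,9,11)]
        omega_weight_twist_pairs_conj[OF assms(1,2,9,10)] by simp
  also have "\<dots> = counit ?R (cmul ?B (cmul ?A ?Z))"
    by (simp only: mulC_left_commute[of ?A])
  also have "\<dots> = counit ?R (cmul ?B' (cmul ?A ?Z))"
    by (rule counit_label_at_min_conj[OF assms(1,2,4) PR sub, symmetric])
  also have "\<dots> = conf one N n (\<rho> \<circ> \<sigma>) (cmul (cmul d3 d4) (Ftw one dual N n cs2 \<rho>)) z"
    using conf_defect_product[OF c(1) assms(1) act_vec_fixvecs[OF assms(1,2,4)] assms(3,7,8,10),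
        unfolded c(2) R, OF assms(11)]
    by simp
  finally show ?thesis .
qed

end

theorem lemma4p18:
  fixes one :: "'l::finite" and dual :: "'l \<Rightarrow> 'l" and N :: "'l \<Rightarrow> 'l \<Rightarrow> 'l \<Rightarrow> nat"
    and n :: nat and \<rho> \<sigma> :: "nat \<Rightarrow> nat" and a b :: "nat \<Rightarrow> 'l"
    and d1 d2 d3 d4 :: "(nat \<Rightarrow> 'l) \<Rightarrow> int" and cs1 cs2 :: "nat list list"
  assumes "fusion_ring one dual N"
    and "n \<ge> 2"
    and "\<rho> permutes {..<n}" and "\<sigma> permutes {..<n}"
    and "a \<in> fixvecs one n \<rho>" and "b \<in> fixvecs one n \<sigma>"
    and "is_deconf one N n \<rho> a d1" and "is_deconf one N n \<sigma> b d2"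
    and "is_deconf one N n (\<rho> \<circ> \<sigma> \<circ> inv \<rho>) (act_vec \<rho> b) d3"
    and "is_deconf one N n \<rho> a d4"
    and "cycle_decomp n \<rho> cs1"
    and "cycle_decomp n (\<rho> \<circ> \<sigma> \<circ> inv \<rho>) cs2"
  shows "defect_prod one dual N n \<rho> \<sigma> d1 d2 cs1
       = defect_prod one dual N n (\<rho> \<circ> \<sigma> \<circ> inv \<rho>) \<rho> d3 d4 cs2"
proof -
  interpret multilayer one dual N n by unfold_locales (rule assms(1))
  note c = conj_permutes[OF assms(3,4)]
  have "conf one N n (\<rho> \<circ> \<sigma>) (cmul (cmul d1 d2) (Ftw one dual N n cs1 \<sigma>))
      = conf one N n (\<rho> \<circ> \<sigma>) (cmul (cmul d3 d4) (Ftw one dual N n cs2 \<rho>))"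
  proof
    fix z
    show "conf one N n (\<rho> \<circ> \<sigma>) (cmul (cmul d1 d2) (Ftw one dual N n cs1 \<sigma>)) z
      = conf one N n (\<rho> \<circ> \<sigma>) (cmul (cmul d3 d4) (Ftw one dual N n cs2 \<rho>)) z"
      by (cases "z \<in> fixvecs one n (\<rho> \<circ> \<sigma>)")
        (simp_all add: conf_zero conf_defect_product_crossed[OF assms(3-12)])
  qed
  then show ?thesis
    unfolding defect_prod_def c(2) using ad_fuse_unit permutes_compose[OF assms(4,3)] by simp
qed

end
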